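(* Consider the unit sphere $\mathbb{S}^2$ in the coordinates $(\varphi,\theta)=(\arcsin z,\operatorname{atan2}(y,x))\in\,]-\tfrac{\pi}{2},\tfrac{\pi}{2}[\,\times\,]-\pi,\pi]$, equipped with the distance $$\tilde d((\theta_1,\varphi_1),(\theta_2,\varphi_2))=\sqrt{\big((\varphi_1-\varphi_2)\bmod\pi\big)^2+\big((\theta_1-\theta_2)\bmod 2\pi\big)^2}$$ and with the uniform probability measure, which in these coordinates is $\nu=\cos\varphi\,\frac{d\varphi\,d\theta}{4\pi}$. Then the MaxEnt posterior of $(\nu,\{\varphi=0\})$ is $\frac{1}{2\pi}\,d\theta\times\delta_0(\varphi)$, while the MaxEnt posterior of $(\nu,\{\theta=0\}\cup\{\theta=\pi\})$ is $\frac{\cos\varphi}{4}\,d\varphi\times(\delta_0(\theta)+\delta_\pi(\theta))$.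
   Context: MaxEnt posterior: on a metric space $(W,\rho)$ with Borel $\sigma$-algebra forming a standard Borel space, with prior Radon probability measure $\nu$, closed set $A\subset\mathrm{Supp}(\nu)$ and a fixed $R>0$, consider for each $\sigma>0$ the problem $\inf_\mu\{\mathrm{Ent}_\nu(\mu): \mu(W)=1,\ \int_W \rho_R(w,A)^2\,d\mu(w)\le\sigma^2\}$, where $\rho_R=\min(\rho,R)$, $\rho(w,A)=\inf_{a\in A}\rho(w,a)$, and $\mathrm{Ent}_\nu(\mu)=\int \frac{d\mu}{d\nu}\ln\frac{d\mu}{d\nu}\,d\nu$ if $\mu\ll\nu$, $+\infty$ otherwise. If for every $\sigma>0$ the infimum is attained by a unique $\mu_\sigma$ and $\mu_\sigma$ converges weakly as $\sigma\to0$, the limit is the MaxEnt posterior of $(\nu,A)$. Here $\operatorname{atan2}(y,x)=2\arctan\frac{y}{\sqrt{x^2+y^2}+x}$; $d\varphi,d\theta$ are Lebesgue measures and $\delta$ denotes Dirac masses. *)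

theory Defs
  imports "HOL-Probability.Probability"
begin

definition dist_to_set :: "('a \<Rightarrow> 'a \<Rightarrow> real) \<Rightarrow> 'a set \<Rightarrow> 'a \<Rightarrow> real" where
  "dist_to_set \<rho> A w = (INF a\<in>A. \<rho> w a)"

definition trunc_dist :: "('a \<Rightarrow> 'a \<Rightarrow> real) \<Rightarrow> real \<Rightarrow> 'a set \<Rightarrow> 'a \<Rightarrow> real" where
  "trunc_dist \<rho> R A w = min (dist_to_set \<rho> A w) R"

text \<open>Since f ln f >= -exp(-1) and nu is a probability measure,
  the (possibly infinite) integral is written as a nonnegative integral minus exp(-1).\<close>
definition Ent :: "'a measure \<Rightarrow> 'a measure \<Rightarrow> ereal" where
  "Ent \<nu> \<mu> =
     (if absolutely_continuous \<nu> \<mu> then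
        enn2ereal (\<integral>\<^sup>+ w. ennreal
            (enn2real (RN_deriv \<nu> \<mu> w) * ln (enn2real (RN_deriv \<nu> \<mu> w)) + exp (-1)) \<partial>\<nu>)
        - ereal (exp (-1))
      else \<infinity>)"

definition maxent_feasible ::
  "'a measure \<Rightarrow> ('a \<Rightarrow> 'a \<Rightarrow> real) \<Rightarrow> real \<Rightarrow> 'a set \<Rightarrow> real \<Rightarrow> 'a measure \<Rightarrow> bool" where
  "maxent_feasible \<nu> \<rho> R A \<sigma> \<mu> \<longleftrightarrow>
     sets \<mu> = sets \<nu> \<and> prob_space \<mu> \<and>
     (\<integral>\<^sup>+ w. ennreal ((trunc_dist \<rho> R A w)\<^sup>2) \<partial>\<mu>) \<le> ennreal (\<sigma>\<^sup>2)"

definition maxent_minimizer ::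
  "'a measure \<Rightarrow> ('a \<Rightarrow> 'a \<Rightarrow> real) \<Rightarrow> real \<Rightarrow> 'a set \<Rightarrow> real \<Rightarrow> 'a measure \<Rightarrow> bool" where
  "maxent_minimizer \<nu> \<rho> R A \<sigma> \<mu> \<longleftrightarrow>
     maxent_feasible \<nu> \<rho> R A \<sigma> \<mu> \<and>
     (\<forall>\<mu>'. maxent_feasible \<nu> \<rho> R A \<sigma> \<mu>' \<longrightarrow> Ent \<nu> \<mu> \<le> Ent \<nu> \<mu>')"

definition metric_continuous :: "('a \<Rightarrow> 'a \<Rightarrow> real) \<Rightarrow> 'a set \<Rightarrow> ('a \<Rightarrow> real) \<Rightarrow> bool" where
  "metric_continuous \<rho> W f \<longleftrightarrow>
     (\<forall>x\<in>W. \<forall>e>0. \<exists>d>0. \<forall>y\<in>W. \<rho> x y < d \<longrightarrow> \<bar>f y - f x\<bar> < e)"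

definition weak_conv_metric ::
  "('a \<Rightarrow> 'a \<Rightarrow> real) \<Rightarrow> 'a set \<Rightarrow> ('b \<Rightarrow> 'a measure) \<Rightarrow> 'a measure \<Rightarrow> 'b filter \<Rightarrow> bool" where
  "weak_conv_metric \<rho> W \<mu>s P F \<longleftrightarrow>
     (\<forall>f. (\<exists>B. \<forall>x\<in>W. \<bar>f x\<bar> \<le> B) \<and> metric_continuous \<rho> W f \<longrightarrow>
        ((\<lambda>s. \<integral>x. f x \<partial>(\<mu>s s)) \<longlongrightarrow> (\<integral>x. f x \<partial>P)) F)"

definition maxent_posterior ::
  "'a measure \<Rightarrow> ('a \<Rightarrow> 'a \<Rightarrow> real) \<Rightarrow> real \<Rightarrow> 'a set \<Rightarrow> 'a measure \<Rightarrow> bool" where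
  "maxent_posterior \<nu> \<rho> R A P \<longleftrightarrow>
     (\<forall>\<sigma>>0. \<exists>!\<mu>. maxent_minimizer \<nu> \<rho> R A \<sigma> \<mu>) \<and>
     weak_conv_metric \<rho> (space \<nu>) (\<lambda>\<sigma>. THE \<mu>. maxent_minimizer \<nu> \<rho> R A \<sigma> \<mu>) P (at_right 0)"

text \<open>Points are pairs (phi, theta).\<close>
definition W_S2 :: "(real \<times> real) set" where
  "W_S2 = {-pi/2<..<pi/2} \<times> {-pi<..pi}"

text \<open>x mod p read as the distance from x to the nearest multiple of p.\<close>
definition per_mod :: "real \<Rightarrow> real \<Rightarrow> real" where
  "per_mod x p = \<bar>x - p * of_int (round (x / p))\<bar>"

definition dS2 :: "real \<times> real \<Rightarrow> real \<times> real \<Rightarrow> real" where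
  "dS2 a b = sqrt ((per_mod (fst a - fst b) pi)\<^sup>2 + (per_mod (snd a - snd b) (2 * pi))\<^sup>2)"

definition M_S2 :: "(real \<times> real) measure" where
  "M_S2 = restrict_space lborel W_S2"

definition nu_S2 :: "(real \<times> real) measure" where
  "nu_S2 = density M_S2 (\<lambda>x. ennreal (cos (fst x) / (4 * pi)))"

definition equator :: "(real \<times> real) set" where
  "equator = {x \<in> W_S2. fst x = 0}"

definition meridians :: "(real \<times> real) set" where
  "meridians = {x \<in> W_S2. snd x = 0 \<or> snd x = pi}"

definition post_equator :: "(real \<times> real) measure" where
  "post_equator = distr
     (count_space {0} \<Otimes>\<^sub>M density (restrict_space lborel {-pi<..pi}) (\<lambda>_. ennreal (1 / (2 * pi))))
     M_S2 (\<lambda>x. x)"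

definition post_meridians :: "(real \<times> real) measure" where
  "post_meridians = distr
     (density (restrict_space lborel {-pi/2<..<pi/2}) (\<lambda>\<phi>. ennreal (cos \<phi> / 4)) \<Otimes>\<^sub>M count_space {0, pi})
     M_S2 (\<lambda>x. x)"

end

(*
  For each \<sigma> > 0 the entropy minimiser under the constraint on the mean of
  g = \<rho>_R(\<cdot>, A)^2 is the Gibbs measure with density exp (- \<lambda> g) / Z: the multiplier
  \<lambda> \<ge> 0 is found by the intermediate value theorem, since the Gibbs mean of g is
  continuous in \<lambda> and tends to 0 (g takes small values with positive probability),
  and minimality and uniqueness follow from the tangent inequality for x ln x.

  For the equator the density depends on the latitude only, for the meridians on the
  longitude only.  Averaging a test function f over the other coordinate writes
  \<integral> f d\<mu>_\<sigma> as \<integral> q_\<sigma> H against a one-dimensional probability density q_\<sigma> whose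
  second moment of min |t| R is at most \<sigma>^2, so by Chebyshev's inequality it tends to
  H 0, which is the integral of f against the claimed limit.  For the meridians the
  longitudes \<theta> and \<theta> \<plusminus> \<pi> are first folded together, which is why H averages over
  both meridians.
*)

theory Submission
  imports Defs "HOL-Real_Asymp.Real_Asymp"
begin

section \<open>Entropy minimisers are Gibbs measures\<close>

lemma xlnx_ge_tangent:
  fixes a b :: real
  assumes "0 \<le> a" "0 < b"
  shows "a * ln b + a - b \<le> a * ln a"
proof (cases "a = 0")
  case False
  with assms have a: "0 < a" by simp
  have "a * ln (b / a) \<le> a * (b / a - 1)"
    using ln_le_minus_one[of "b / a"] a assms by (intro mult_left_mono) auto
  with a assms show ?thesis by (simp add: ln_div algebra_simps)
qed (use assms in simp)

lemma xlnx_eq_tangent_imp_eq: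
  fixes a b :: real
  assumes "0 \<le> a" "0 < b" "a * ln a = a * ln b + a - b"
  shows "a = b"
proof (cases "a = 0")
  case False
  with assms have a: "0 < a" by simp
  have "a * ln (b / a) = a * (b / a - 1)"
    using a assms by (simp add: ln_div algebra_simps)
  with a have "ln (b / a) = b / a - 1" by simp
  with a assms have "b / a = 1" by (intro ln_eq_minus_one) auto
  with a show ?thesis by simp
qed (use assms in simp)

lemma xlnx_ge_neg_exp_neg_one:
  fixes a :: real
  assumes "0 \<le> a"
  shows "- exp (- 1) \<le> a * ln a"
  using xlnx_ge_tangent[OF assms, of "exp (- 1)"] by simp

lemma abs_exp_neg_diff_le:
  fixes a b :: real
  assumes "0 \<le> a" "0 \<le> b"
  shows "\<bar>exp (- a) - exp (- b)\<bar> \<le> \<bar>a - b\<bar>"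
proof -
  have *: "exp (- x) - exp (- y) \<le> y - x" if "0 \<le> x" "x \<le> y" for x y :: real
  proof -
    have "exp (- x) - exp (- y) = exp (- x) * (1 - exp (- (y - x)))"
      by (simp add: algebra_simps flip: exp_add)
    also have "\<dots> \<le> 1 - exp (- (y - x))"
      using that by (intro mult_left_le_one_le) auto
    also have "\<dots> \<le> y - x"
      using exp_ge_add_one_self[of "x - y"] by (simp only: minus_diff_eq)
    finally show ?thesis .
  qed
  show ?thesis
    using *[of a b] *[of b a] assms by (cases "a \<le> b") auto
qed

lemma Ent_density:
  assumes "prob_space M" and f_meas: "f \<in> borel_measurable M"
    and f_nonneg: "\<And>x. x \<in> space M \<Longrightarrow> 0 \<le> f x"
  shows "Ent M (density M (\<lambda>x. ennreal (f x))) =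
    (if integrable M (\<lambda>x. f x * ln (f x)) then ereal (\<integral>x. f x * ln (f x) \<partial>M) else \<infinity>)"
proof -
  interpret prob_space M by fact
  let ?\<mu> = "density M (\<lambda>x. ennreal (f x))"
  let ?h = "\<lambda>x. f x * ln (f x) + exp (- 1)"
  have "AE x in M. ennreal (f x) = RN_deriv M ?\<mu> x"
    using f_meas by (intro RN_deriv_unique) auto
  then have RN: "AE x in M. enn2real (RN_deriv M ?\<mu> x) = f x"
    using AE_space by eventually_elim (metis enn2real_ennreal f_nonneg)
  have "(\<integral>\<^sup>+ x. ennreal (enn2real (RN_deriv M ?\<mu> x) * ln (enn2real (RN_deriv M ?\<mu> x)) + exp (- 1)) \<partial>M)
      = (\<integral>\<^sup>+ x. ennreal (?h x) \<partial>M)"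
    apply (rule nn_integral_cong_AE)
    using RN by eventually_elim simp
  then have Ent_eq: "Ent M ?\<mu> = enn2ereal (\<integral>\<^sup>+ x. ennreal (?h x) \<partial>M) - ereal (exp (- 1))"
    unfolding Ent_def using f_meas by (simp add: absolutely_continuousI_density)
  have h_nonneg: "x \<in> space M \<Longrightarrow> 0 \<le> ?h x" for x
    using xlnx_ge_neg_exp_neg_one[OF f_nonneg, of x] by simp
  show ?thesis
  proof (cases "integrable M (\<lambda>x. f x * ln (f x))")
    case True
    then have "(\<integral>\<^sup>+ x. ennreal (?h x) \<partial>M) = ennreal ((\<integral>x. f x * ln (f x) \<partial>M) + exp (- 1))"
      using h_nonneg by (subst nn_integral_eq_integral) (auto simp: prob_space)
    moreover have "0 \<le> (\<integral>x. f x * ln (f x) \<partial>M) + exp (- 1)"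
      using True h_nonneg integral_nonneg_AE[of ?h M] by (auto simp: prob_space)
    ultimately show ?thesis
      using True by (simp add: Ent_eq enn2ereal_ennreal)
  next
    case False
    have "\<not> integrable M ?h"
      using Bochner_Integration.integrable_diff[of M ?h "\<lambda>_. exp (- 1)"] False by auto
    then have "(\<integral>\<^sup>+ x. ennreal (?h x) \<partial>M) = \<infinity>"
      using f_meas h_nonneg
      by (auto simp: integrable_iff_bounded top_unique not_less cong: nn_integral_cong)
    with False show ?thesis by (simp add: Ent_eq)
  qed
qed

lemma absolutely_continuous_real_density:
  assumes "prob_space M" "prob_space \<mu>" "sets \<mu> = sets M" "absolutely_continuous M \<mu>"
  obtains f where "f \<in> borel_measurable M" "\<And>x. x \<in> space M \<Longrightarrow> 0 \<le> f x"
    "\<mu> = density M (\<lambda>x. ennreal (f x))"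
proof -
  interpret prob_space M by fact
  interpret \<mu>: prob_space \<mu> by fact
  have "AE x in M. RN_deriv M \<mu> x \<noteq> \<infinity>"
    using assms by (intro RN_deriv_finite) (auto simp: \<mu>.sigma_finite_measure_axioms)
  then have "density M (\<lambda>x. ennreal (enn2real (RN_deriv M \<mu> x))) = density M (RN_deriv M \<mu>)"
    by (intro density_cong) (auto elim!: AE_mp intro!: AE_I2 simp: ennreal_enn2real_if)
  also have "\<dots> = \<mu>"
    using assms by (intro density_RN_deriv) auto
  finally show ?thesis
    by (intro that[of "\<lambda>x. enn2real (RN_deriv M \<mu> x)"]) auto
qed

lemma (in prob_space) abs_integral_diff_le:
  fixes a b :: "'a \<Rightarrow> real"
  assumes "integrable M a" "integrable M b" "\<And>x. x \<in> space M \<Longrightarrow> \<bar>a x - b x\<bar> \<le> c"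
  shows "\<bar>(\<integral>x. a x \<partial>M) - (\<integral>x. b x \<partial>M)\<bar> \<le> c"
proof -
  have "\<bar>(\<integral>x. a x \<partial>M) - (\<integral>x. b x \<partial>M)\<bar> = \<bar>\<integral>x. a x - b x \<partial>M\<bar>"
    using assms by simp
  also have "\<dots> \<le> (\<integral>x. \<bar>a x - b x\<bar> \<partial>M)"
    using integral_norm_bound[of M "\<lambda>x. a x - b x"] by simp
  also have "\<dots> \<le> (\<integral>x. c \<partial>M)"
    using assms by (intro integral_mono) auto
  finally show ?thesis
    by (simp add: prob_space)
qed

definition gibbs_density :: "'a measure \<Rightarrow> ('a \<Rightarrow> real) \<Rightarrow> real \<Rightarrow> 'a \<Rightarrow> real" where
  "gibbs_density M g l x = exp (- l * g x) / (\<integral>y. exp (- l * g y) \<partial>M)"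

locale bounded_potential = prob_space M for M :: "'a measure" +
  fixes g :: "'a \<Rightarrow> real" and K :: real
  assumes g_measurable [measurable]: "g \<in> borel_measurable M"
    and g_nonneg: "\<And>x. x \<in> space M \<Longrightarrow> 0 \<le> g x"
    and g_le: "\<And>x. x \<in> space M \<Longrightarrow> g x \<le> K"
begin

definition partition_function :: "real \<Rightarrow> real" where
  "partition_function l = (\<integral>x. exp (- l * g x) \<partial>M)"

definition gibbs_mean :: "real \<Rightarrow> real" where
  "gibbs_mean l = (\<integral>x. gibbs_density M g l x * g x \<partial>M)"

definition admissible :: "real \<Rightarrow> 'a measure \<Rightarrow> bool" where
  "admissible s \<mu> \<longleftrightarrow>
     sets \<mu> = sets M \<and> prob_space \<mu> \<and> (\<integral>\<^sup>+x. ennreal (g x) \<partial>\<mu>) \<le> ennreal s"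

lemma K_nonneg: "0 \<le> K"
  using g_nonneg g_le not_empty by (meson equals0I order_trans)

lemma exp_neg_g_bounds:
  assumes "0 \<le> l" "x \<in> space M"
  shows "exp (- l * K) \<le> exp (- l * g x)" "exp (- l * g x) \<le> 1"
  using g_nonneg[OF assms(2)] g_le[OF assms(2)] assms(1) by (auto simp: mult_left_mono)

lemma exp_neg_g_mult_g_le:
  assumes "0 \<le> l" "x \<in> space M"
  shows "exp (- l * g x) * g x \<le> K"
  using mult_mono[OF exp_neg_g_bounds(2)[OF assms] g_le[OF assms(2)]] g_nonneg[OF assms(2)] by simp

lemma integrable_exp_neg_g: "0 \<le> l \<Longrightarrow> integrable M (\<lambda>x. exp (- l * g x))"
  using exp_neg_g_bounds by (intro integrable_const_bound[where B=1]) auto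

lemma integrable_exp_neg_g_mult_g: "0 \<le> l \<Longrightarrow> integrable M (\<lambda>x. exp (- l * g x) * g x)"
  using exp_neg_g_mult_g_le g_nonneg by (intro integrable_const_bound[where B=K]) auto

lemma partition_function_ge: "0 \<le> l \<Longrightarrow> exp (- l * K) \<le> partition_function l"
  unfolding partition_function_def
  using integral_mono[OF integrable_const integrable_exp_neg_g, of l "exp (- l * K)"] exp_neg_g_bounds
  by (simp add: prob_space)

lemma partition_function_pos: "0 \<le> l \<Longrightarrow> 0 < partition_function l"
  by (metis partition_function_ge exp_gt_zero less_le_trans)

lemma gibbs_density_eq: "gibbs_density M g l = (\<lambda>x. exp (- l * g x) / partition_function l)"
  by (simp add: fun_eq_iff gibbs_density_def partition_function_def)

lemma gibbs_density_measurable [measurable]: "gibbs_density M g l \<in> borel_measurable M"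
  unfolding gibbs_density_eq by measurable

lemma gibbs_density_pos: "0 \<le> l \<Longrightarrow> 0 < gibbs_density M g l x"
  using partition_function_pos[of l] by (simp add: gibbs_density_eq)

lemma gibbs_density_nonneg: "0 \<le> l \<Longrightarrow> 0 \<le> gibbs_density M g l x"
  using gibbs_density_pos[of l x] by simp

lemma ln_gibbs_density:
  "0 \<le> l \<Longrightarrow> ln (gibbs_density M g l x) = - l * g x - ln (partition_function l)"
  using partition_function_pos[of l] by (simp add: gibbs_density_eq ln_div)

lemma integrable_gibbs_density: "0 \<le> l \<Longrightarrow> integrable M (gibbs_density M g l)"
  using integrable_exp_neg_g by (simp add: gibbs_density_eq)

lemma integrable_gibbs_density_mult_g:
  "0 \<le> l \<Longrightarrow> integrable M (\<lambda>x. gibbs_density M g l x * g x)"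
  using integrable_exp_neg_g_mult_g by (simp add: gibbs_density_eq)

lemma integral_gibbs_density: "0 \<le> l \<Longrightarrow> (\<integral>x. gibbs_density M g l x \<partial>M) = 1"
  using partition_function_pos[of l] by (simp add: gibbs_density_eq partition_function_def)

lemma gibbs_mean_eq:
  "gibbs_mean l = (\<integral>x. exp (- l * g x) * g x \<partial>M) / partition_function l"
  by (simp add: gibbs_mean_def gibbs_density_eq)

lemma admissible_density_integrals:
  assumes f: "f \<in> borel_measurable M" "\<And>x. x \<in> space M \<Longrightarrow> 0 \<le> f x"
    and adm: "admissible s (density M (\<lambda>x. ennreal (f x)))" and s: "0 \<le> s"
  shows "integrable M f" "(\<integral>x. f x \<partial>M) = 1"
    "integrable M (\<lambda>x. f x * g x)" "(\<integral>x. f x * g x \<partial>M) \<le> s"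
proof -
  interpret f: prob_space "density M (\<lambda>x. ennreal (f x))"
    using adm by (simp add: admissible_def)
  have "(\<integral>\<^sup>+x. ennreal (f x) \<partial>M) = emeasure (density M (\<lambda>x. ennreal (f x))) (space M)"
    using f by (simp add: emeasure_density cong: nn_integral_cong)
  then have nn_f: "(\<integral>\<^sup>+x. ennreal (f x) \<partial>M) = 1"
    using f.emeasure_space_1 by simp
  show f_int: "integrable M f"
    using nn_f f by (intro integrableI_nonneg) auto
  have "ennreal (\<integral>x. f x \<partial>M) = 1"
    using nn_f f_int f by (subst nn_integral_eq_integral[symmetric]) auto
  then show "(\<integral>x. f x \<partial>M) = 1"
    by (simp add: ennreal_eq_1)
  have "(\<integral>\<^sup>+x. ennreal (f x * g x) \<partial>M) = (\<integral>\<^sup>+x. ennreal (g x) \<partial>density M (\<lambda>x. ennreal (f x)))"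
    using f g_nonneg by (simp add: nn_integral_density ennreal_mult cong: nn_integral_cong)
  also have "\<dots> \<le> ennreal s"
    using adm by (simp add: admissible_def)
  finally have nn_fg: "(\<integral>\<^sup>+x. ennreal (f x * g x) \<partial>M) \<le> ennreal s" .
  have "(\<integral>\<^sup>+x. ennreal (f x * g x) \<partial>M) < \<infinity>"
    using nn_fg by (rule le_less_trans) simp
  then show fg_int: "integrable M (\<lambda>x. f x * g x)"
    using f g_nonneg by (intro integrableI_nonneg) auto
  have "ennreal (\<integral>x. f x * g x \<partial>M) \<le> ennreal s"
    using nn_fg fg_int f g_nonneg by (subst nn_integral_eq_integral[symmetric]) auto
  then show "(\<integral>x. f x * g x \<partial>M) \<le> s"
    using s by (simp add: ennreal_le_iff)
qed

lemma prob_space_gibbs: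
  assumes l: "0 \<le> l"
  shows "prob_space (density M (\<lambda>x. ennreal (gibbs_density M g l x)))"
proof (rule prob_spaceI)
  have "emeasure (density M (\<lambda>x. ennreal (gibbs_density M g l x))) (space M)
      = (\<integral>\<^sup>+x. ennreal (gibbs_density M g l x) \<partial>M)"
    by (simp add: emeasure_density cong: nn_integral_cong)
  also have "\<dots> = ennreal (\<integral>x. gibbs_density M g l x \<partial>M)"
    using gibbs_density_nonneg[OF l] by (intro nn_integral_eq_integral integrable_gibbs_density[OF l]) auto
  finally show "emeasure (density M (\<lambda>x. ennreal (gibbs_density M g l x)))
      (space (density M (\<lambda>x. ennreal (gibbs_density M g l x)))) = 1"
    using l by (simp add: integral_gibbs_density)
qed

lemma admissible_gibbs:
  assumes l: "0 \<le> l" and mean: "gibbs_mean l \<le> s"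
  shows "admissible s (density M (\<lambda>x. ennreal (gibbs_density M g l x)))"
proof -
  have nonneg: "x \<in> space M \<Longrightarrow> 0 \<le> gibbs_density M g l x * g x" for x
    using gibbs_density_pos[OF l, of x] g_nonneg[of x] by simp
  have "(\<integral>\<^sup>+x. ennreal (g x) \<partial>density M (\<lambda>x. ennreal (gibbs_density M g l x)))
      = (\<integral>\<^sup>+x. ennreal (gibbs_density M g l x * g x) \<partial>M)"
    using gibbs_density_nonneg[OF l] g_nonneg
    by (simp add: nn_integral_density ennreal_mult cong: nn_integral_cong)
  also have "\<dots> = ennreal (gibbs_mean l)"
    unfolding gibbs_mean_def using nonneg integrable_gibbs_density_mult_g[OF l]
    by (intro nn_integral_eq_integral AE_I2) auto
  also have "\<dots> \<le> ennreal s"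
    using mean by (rule ennreal_leI)
  finally show ?thesis
    using l by (simp add: admissible_def prob_space_gibbs)
qed

lemma Ent_gibbs:
  assumes l: "0 \<le> l"
  shows "Ent M (density M (\<lambda>x. ennreal (gibbs_density M g l x)))
    = ereal (- l * gibbs_mean l - ln (partition_function l))"
proof -
  have eq: "(\<lambda>x. gibbs_density M g l x * ln (gibbs_density M g l x))
      = (\<lambda>x. - l * (gibbs_density M g l x * g x) - ln (partition_function l) * gibbs_density M g l x)"
    using l by (simp add: fun_eq_iff ln_gibbs_density algebra_simps)
  have int: "integrable M (\<lambda>x. gibbs_density M g l x * ln (gibbs_density M g l x))"
    unfolding eq using integrable_gibbs_density[OF l] integrable_gibbs_density_mult_g[OF l] by simp
  have "(\<integral>x. gibbs_density M g l x * ln (gibbs_density M g l x) \<partial>M)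
      = - l * gibbs_mean l - ln (partition_function l)"
    unfolding eq gibbs_mean_def
    using integrable_gibbs_density[OF l] integrable_gibbs_density_mult_g[OF l] integral_gibbs_density[OF l]
    by simp
  then show ?thesis
    using Ent_density[OF prob_space_axioms gibbs_density_measurable gibbs_density_nonneg[OF l]] int
    by simp
qed

lemma integral_xlnx_ge_gibbs:
  assumes l: "0 \<le> l"
    and f: "f \<in> borel_measurable M" "\<And>x. x \<in> space M \<Longrightarrow> 0 \<le> f x"
    and f_int: "integrable M f" "(\<integral>x. f x \<partial>M) = 1" "integrable M (\<lambda>x. f x * g x)"
    and slack: "l * (\<integral>x. f x * g x \<partial>M) \<le> l * gibbs_mean l"
    and xlnx_int: "integrable M (\<lambda>x. f x * ln (f x))"
  shows "- l * gibbs_mean l - ln (partition_function l) \<le> (\<integral>x. f x * ln (f x) \<partial>M)"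
    and "(\<integral>x. f x * ln (f x) \<partial>M) \<le> - l * gibbs_mean l - ln (partition_function l) \<Longrightarrow>
      AE x in M. f x = gibbs_density M g l x"
proof -
  let ?p = "gibbs_density M g l"
  define D where "D x = f x * ln (f x) - (f x * ln (?p x) + f x - ?p x)" for x
  have D_nonneg: "x \<in> space M \<Longrightarrow> 0 \<le> D x" for x
    unfolding D_def using xlnx_ge_tangent[OF f(2) gibbs_density_pos[OF l]] by simp
  have D_eq: "D x = f x * ln (f x) + l * (f x * g x) + ln (partition_function l) * f x - f x + ?p x" for x
    unfolding D_def using l by (simp add: ln_gibbs_density algebra_simps)
  have D_int: "integrable M D"
    unfolding D_eq using xlnx_int f_int integrable_gibbs_density[OF l] by simp
  have "(\<integral>x. D x \<partial>M)
      = (\<integral>x. f x * ln (f x) \<partial>M) + l * (\<integral>x. f x * g x \<partial>M) + ln (partition_function l)"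
    unfolding D_eq using xlnx_int f_int integrable_gibbs_density[OF l] integral_gibbs_density[OF l]
    by simp
  then have integral_D: "(\<integral>x. D x \<partial>M)
      \<le> (\<integral>x. f x * ln (f x) \<partial>M) + l * gibbs_mean l + ln (partition_function l)"
    using slack by linarith
  have "0 \<le> (\<integral>x. D x \<partial>M)"
    using D_nonneg by (intro integral_nonneg_AE) auto
  with integral_D show "- l * gibbs_mean l - ln (partition_function l) \<le> (\<integral>x. f x * ln (f x) \<partial>M)"
    by linarith
  assume "(\<integral>x. f x * ln (f x) \<partial>M) \<le> - l * gibbs_mean l - ln (partition_function l)"
  with integral_D \<open>0 \<le> (\<integral>x. D x \<partial>M)\<close> have "(\<integral>x. D x \<partial>M) = 0"
    by linarith
  then have "AE x in M. D x = 0"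
    using D_int D_nonneg by (subst (asm) integral_nonneg_eq_0_iff_AE) auto
  then show "AE x in M. f x = ?p x"
  proof (rule AE_mp, intro AE_I2 impI)
    fix x assume "x \<in> space M" "D x = 0"
    then show "f x = ?p x"
      using xlnx_eq_tangent_imp_eq[OF f(2) gibbs_density_pos[OF l]] by (simp add: D_def)
  qed
qed

lemma gibbs_minimizes_Ent:
  assumes l: "0 \<le> l" and s: "0 \<le> s" and mean: "gibbs_mean l \<le> s" "l = 0 \<or> gibbs_mean l = s"
    and adm: "admissible s \<mu>"
  defines "G \<equiv> density M (\<lambda>x. ennreal (gibbs_density M g l x))"
  shows "Ent M G \<le> Ent M \<mu> \<and> (Ent M \<mu> \<le> Ent M G \<longrightarrow> \<mu> = G)"
proof (cases "absolutely_continuous M \<mu>")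
  case False
  then show ?thesis
    using Ent_gibbs[OF l] by (simp add: G_def Ent_def)
next
  case True
  obtain f where f: "f \<in> borel_measurable M" "\<And>x. x \<in> space M \<Longrightarrow> 0 \<le> f x"
    and \<mu>: "\<mu> = density M (\<lambda>x. ennreal (f x))"
    using adm True by (auto simp: admissible_def intro: absolutely_continuous_real_density[OF prob_space_axioms])
  note f_int = admissible_density_integrals[OF f adm[unfolded \<mu>] s]
  have slack: "l * (\<integral>x. f x * g x \<partial>M) \<le> l * gibbs_mean l"
    using mean f_int(4) l by (auto intro: mult_left_mono)
  note Ent_f = Ent_density[OF prob_space_axioms f]
  show ?thesis
  proof (cases "integrable M (\<lambda>x. f x * ln (f x))")
    case False
    then show ?thesis
      using Ent_gibbs[OF l] by (simp add: G_def \<mu> Ent_f)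
  next
    case True
    note ineq = integral_xlnx_ge_gibbs[OF l f f_int(1-3) slack True]
    have "\<mu> = G" if "AE x in M. f x = gibbs_density M g l x"
      unfolding \<mu> G_def using that f by (intro density_cong) (auto elim!: AE_mp)
    with ineq show ?thesis
      using Ent_gibbs[OF l] True by (simp add: G_def \<mu> Ent_f)
  qed
qed

lemma continuous_on_gibbs_mean: "continuous_on {0..} gibbs_mean"
proof -
  have exp_diff: "\<bar>exp (- l * g x) - exp (- l' * g x)\<bar> \<le> K * \<bar>l - l'\<bar>"
    if "x \<in> space M" "0 \<le> l" "0 \<le> l'" for x l l'
  proof -
    have "\<bar>exp (- (l * g x)) - exp (- (l' * g x))\<bar> \<le> \<bar>l * g x - l' * g x\<bar>"
      using g_nonneg[OF that(1)] that by (intro abs_exp_neg_diff_le) auto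
    also have "\<dots> = \<bar>l - l'\<bar> * g x"
      using g_nonneg[OF that(1)] by (simp add: abs_mult left_diff_distrib[symmetric])
    also have "\<dots> \<le> \<bar>l - l'\<bar> * K"
      using g_le[OF that(1)] by (intro mult_left_mono) auto
    finally show ?thesis
      by (simp add: mult.commute)
  qed
  have exp_g_diff: "\<bar>exp (- l * g x) * g x - exp (- l' * g x) * g x\<bar> \<le> K * K * \<bar>l - l'\<bar>"
    if "x \<in> space M" "0 \<le> l" "0 \<le> l'" for x l l'
  proof -
    have "\<bar>exp (- l * g x) * g x - exp (- l' * g x) * g x\<bar> = \<bar>exp (- l * g x) - exp (- l' * g x)\<bar> * g x"
      using g_nonneg[OF that(1)] by (simp add: abs_mult left_diff_distrib[symmetric])
    also have "\<dots> \<le> (K * \<bar>l - l'\<bar>) * K"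
      using exp_diff[OF that] g_nonneg[OF that(1)] g_le[OF that(1)] by (intro mult_mono) auto
    finally show ?thesis
      by (simp add: ac_simps)
  qed
  have "K-lipschitz_on {0..} partition_function"
  proof (rule lipschitz_onI)
    fix l l' :: real assume "l \<in> {0..}" "l' \<in> {0..}"
    then show "dist (partition_function l) (partition_function l') \<le> K * dist l l'"
      unfolding partition_function_def dist_real_def
      by (intro abs_integral_diff_le integrable_exp_neg_g exp_diff) auto
  qed (rule K_nonneg)
  moreover have "(K * K)-lipschitz_on {0..} (\<lambda>l. \<integral>x. exp (- l * g x) * g x \<partial>M)"
  proof (rule lipschitz_onI)
    fix l l' :: real assume "l \<in> {0..}" "l' \<in> {0..}"
    then show "dist (\<integral>x. exp (- l * g x) * g x \<partial>M) (\<integral>x. exp (- l' * g x) * g x \<partial>M) \<le> K * K * dist l l'"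
      unfolding dist_real_def
      by (intro abs_integral_diff_le integrable_exp_neg_g_mult_g exp_g_diff) auto
  qed (use K_nonneg in simp)
  ultimately show ?thesis
    unfolding gibbs_mean_eq using partition_function_pos
    by (intro continuous_on_divide lipschitz_on_continuous_on) (auto dest: less_imp_neq[THEN not_sym])
qed

lemma partition_function_ge_measure:
  assumes l: "0 \<le> l"
  shows "exp (- (l * d)) * measure M {x \<in> space M. g x < d} \<le> partition_function l"
proof -
  let ?A = "{x \<in> space M. g x < d}"
  have A: "?A \<in> sets M"
    by measurable
  have "(\<integral>x. exp (- (l * d)) * indicator ?A x \<partial>M) \<le> partition_function l"
    unfolding partition_function_def
  proof (rule integral_mono)
    show "integrable M (\<lambda>x. exp (- (l * d)) * indicator ?A x)"
      using A by (intro integrable_mult_right integrable_real_indicator) (auto simp: emeasure_eq_measure)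
    fix x assume "x \<in> space M"
    then show "exp (- (l * d)) * indicator ?A x \<le> exp (- l * g x)"
      using l by (auto simp: indicator_def intro: mult_left_mono)
  qed (rule integrable_exp_neg_g[OF l])
  then show ?thesis
    using A by simp
qed

lemma integral_exp_neg_g_mult_g_le:
  assumes l: "0 \<le> l" and e: "0 \<le> e"
  shows "(\<integral>x. exp (- l * g x) * g x \<partial>M) \<le> e * partition_function l + K * exp (- (l * e))"
proof -
  have "(\<integral>x. exp (- l * g x) * g x \<partial>M) \<le> (\<integral>x. e * exp (- l * g x) + K * exp (- (l * e)) \<partial>M)"
  proof (rule integral_mono)
    fix x assume x: "x \<in> space M"
    show "exp (- l * g x) * g x \<le> e * exp (- l * g x) + K * exp (- (l * e))"
    proof (cases "g x \<le> e")
      case True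
      then have "exp (- l * g x) * g x \<le> e * exp (- l * g x)"
        by (simp add: mult.commute)
      then show ?thesis
        using K_nonneg by (simp add: add_increasing2)
    next
      case False
      then have "exp (- l * g x) \<le> exp (- (l * e))"
        using l by (simp add: mult_left_mono)
      then have "exp (- l * g x) * g x \<le> exp (- (l * e)) * K"
        using g_nonneg[OF x] g_le[OF x] by (intro mult_mono) auto
      moreover have "0 \<le> e * exp (- l * g x)"
        using e by simp
      ultimately show ?thesis
        by (simp add: mult.commute)
    qed
  qed (use integrable_exp_neg_g[OF l] integrable_exp_neg_g_mult_g[OF l] in auto)
  also have "\<dots> = e * partition_function l + K * exp (- (l * e))"
    unfolding partition_function_def using integrable_exp_neg_g[OF l] by (simp add: prob_space)
  finally show ?thesis .
qed

lemma gibbs_mean_le: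
  assumes l: "0 \<le> l" and d: "0 \<le> d" and m: "0 < measure M {x \<in> space M. g x < d}"
  shows "gibbs_mean l \<le> 2 * d + K / measure M {x \<in> space M. g x < d} * exp (- (l * d))"
proof -
  define m where "m = measure M {x \<in> space M. g x < d}"
  define Z where "Z = partition_function l"
  have Z: "exp (- (l * d)) * m \<le> Z" "0 < Z"
    using partition_function_ge_measure[OF l] partition_function_pos[OF l] by (simp_all add: m_def Z_def)
  have "gibbs_mean l \<le> (2 * d * Z + K * exp (- (l * (2 * d)))) / Z"
    unfolding gibbs_mean_eq Z_def
    using integral_exp_neg_g_mult_g_le[OF l, of "2 * d"] d partition_function_pos[OF l]
    by (intro divide_right_mono) auto
  also have "\<dots> = 2 * d + K * exp (- (l * (2 * d))) / Z"
    using Z by (simp add: add_divide_distrib)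
  also have "K * exp (- (l * (2 * d))) / Z \<le> K * exp (- (l * (2 * d))) / (exp (- (l * d)) * m)"
    using Z m K_nonneg by (intro divide_left_mono) (auto simp: m_def)
  also have "K * exp (- (l * (2 * d))) / (exp (- (l * d)) * m) = K / m * exp (- (l * d))"
    using m by (simp add: m_def field_simps flip: exp_add)
  finally show ?thesis
    by (simp add: m_def)
qed

lemma eventually_gibbs_mean_le:
  assumes pos: "\<And>e. 0 < e \<Longrightarrow> 0 < measure M {x \<in> space M. g x < e}" and s: "0 < s"
  shows "\<forall>\<^sub>F l in at_top. gibbs_mean l \<le> s"
proof -
  define m where "m = measure M {x \<in> space M. g x < s / 4}"
  have m: "0 < m"
    unfolding m_def using s by (intro pos) simp
  have "\<forall>\<^sub>F l in at_top. K / m * exp (- (l * (s / 4))) < s / 2"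
    using s by real_asymp
  moreover have "\<forall>\<^sub>F l in at_top. (0::real) \<le> l"
    by simp
  ultimately show ?thesis
  proof eventually_elim
    case (elim l)
    then show ?case
      using gibbs_mean_le[of l "s / 4", folded m_def] m s by linarith
  qed
qed

lemma exists_gibbs_multiplier:
  assumes pos: "\<And>e. 0 < e \<Longrightarrow> 0 < measure M {x \<in> space M. g x < e}" and s: "0 < s"
  obtains l where "0 \<le> l" "gibbs_mean l \<le> s" "l = 0 \<or> gibbs_mean l = s"
proof (cases "gibbs_mean 0 \<le> s")
  case True
  with that[of 0] show ?thesis
    by simp
next
  case False
  obtain N where N: "\<And>l. N \<le> l \<Longrightarrow> gibbs_mean l \<le> s"
    using eventually_gibbs_mean_le[OF pos s] by (auto simp: eventually_at_top_linorder)
  define L where "L = max 0 N"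
  have L: "0 \<le> L" "gibbs_mean L \<le> s"
    using N[of L] by (auto simp: L_def)
  have "continuous_on {0..L} gibbs_mean"
    using continuous_on_gibbs_mean by (rule continuous_on_subset) auto
  then obtain l where "0 \<le> l" "gibbs_mean l = s"
    using IVT2'[of gibbs_mean L s 0] L False by auto
  with that show ?thesis
    by simp
qed

theorem gibbs_unique_minimizer:
  assumes pos: "\<And>e. 0 < e \<Longrightarrow> 0 < measure M {x \<in> space M. g x < e}" and s: "0 < s"
  obtains l where "0 \<le> l"
    "\<And>\<mu>. (admissible s \<mu> \<and> (\<forall>\<mu>'. admissible s \<mu>' \<longrightarrow> Ent M \<mu> \<le> Ent M \<mu>')) \<longleftrightarrow>
      \<mu> = density M (\<lambda>x. ennreal (gibbs_density M g l x))"
proof -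
  obtain l where l: "0 \<le> l" "gibbs_mean l \<le> s" "l = 0 \<or> gibbs_mean l = s"
    using exists_gibbs_multiplier[OF pos s] .
  note minimizes = gibbs_minimizes_Ent[OF l(1) less_imp_le[OF s] l(2,3)]
  show ?thesis
    using l(1) admissible_gibbs[OF l(1,2)] minimizes by (intro that[of l]) blast+
qed

end

lemma maxent_minimizer_gibbs:
  fixes \<rho> :: "'a \<Rightarrow> 'a \<Rightarrow> real" and R :: real and A :: "'a set"
  defines "g \<equiv> \<lambda>w. (trunc_dist \<rho> R A w)\<^sup>2"
  assumes \<nu>: "prob_space \<nu>" and R: "0 < R" and \<sigma>: "0 < \<sigma>"
    and dist_nonneg: "\<And>w. w \<in> space \<nu> \<Longrightarrow> 0 \<le> dist_to_set \<rho> A w"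
    and g_meas: "g \<in> borel_measurable \<nu>"
    and pos: "\<And>e. 0 < e \<Longrightarrow> 0 < measure \<nu> {w \<in> space \<nu>. g w < e}"
  obtains l where "0 \<le> l"
    "\<And>\<mu>. maxent_minimizer \<nu> \<rho> R A \<sigma> \<mu> \<longleftrightarrow> \<mu> = density \<nu> (\<lambda>w. ennreal (gibbs_density \<nu> g l w))"
proof -
  have g_bounds: "0 \<le> g w \<and> g w \<le> R\<^sup>2" if "w \<in> space \<nu>" for w
  proof -
    have "0 \<le> trunc_dist \<rho> R A w" "trunc_dist \<rho> R A w \<le> R"
      using dist_nonneg[OF that] R by (auto simp: trunc_dist_def)
    then show ?thesis
      by (auto simp: g_def intro: power_mono)
  qed
  interpret bounded_potential \<nu> g "R\<^sup>2"
    using \<nu> g_meas g_bounds by (simp add: bounded_potential_def bounded_potential_axioms_def)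
  have "0 < \<sigma>\<^sup>2"
    using \<sigma> by simp
  moreover have "maxent_minimizer \<nu> \<rho> R A \<sigma> \<mu> \<longleftrightarrow>
      admissible (\<sigma>\<^sup>2) \<mu> \<and> (\<forall>\<mu>'. admissible (\<sigma>\<^sup>2) \<mu>' \<longrightarrow> Ent \<nu> \<mu> \<le> Ent \<nu> \<mu>')" for \<mu>
    unfolding maxent_minimizer_def maxent_feasible_def admissible_def by (simp add: g_def)
  ultimately show ?thesis
    using gibbs_unique_minimizer[OF pos] that by metis
qed

lemma gibbs_density_trunc_dist:
  assumes l: "0 \<le> l"
  shows "\<exists>h C. h \<in> borel_measurable borel \<and> (\<forall>d. 0 \<le> h d \<and> h d \<le> C) \<and>
    gibbs_density \<nu> (\<lambda>x. (trunc_dist \<rho> R A x)\<^sup>2) l = (\<lambda>x. h (dist_to_set \<rho> A x))"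
proof -
  define Z where "Z = (\<integral>x. exp (- l * (trunc_dist \<rho> R A x)\<^sup>2) \<partial>\<nu>)"
  have Z: "0 \<le> Z"
    unfolding Z_def by (rule integral_nonneg_AE) simp
  show ?thesis
  proof (intro exI[of _ "\<lambda>d. exp (- l * (min d R)\<^sup>2) / Z"] exI[of _ "1 / Z"] conjI allI)
    show "(\<lambda>d. exp (- l * (min d R)\<^sup>2) / Z) \<in> borel_measurable borel"
      by measurable
    show "0 \<le> exp (- l * (min d R)\<^sup>2) / Z" for d
      using Z by simp
    show "exp (- l * (min d R)\<^sup>2) / Z \<le> 1 / Z" for d
      using Z l by (intro divide_right_mono) auto
    show "gibbs_density \<nu> (\<lambda>x. (trunc_dist \<rho> R A x)\<^sup>2) l
        = (\<lambda>x. exp (- l * (min (dist_to_set \<rho> A x) R)\<^sup>2) / Z)"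
      by (simp add: fun_eq_iff gibbs_density_def trunc_dist_def Z_def)
  qed
qed

lemma maxent_feasible_integrals:
  assumes feasible: "maxent_feasible \<nu> \<rho> R A \<sigma> \<mu>"
    and g: "(\<lambda>w. (trunc_dist \<rho> R A w)\<^sup>2) \<in> borel_measurable \<nu>"
      "\<And>w. w \<in> space \<nu> \<Longrightarrow> (trunc_dist \<rho> R A w)\<^sup>2 \<le> K"
  shows "(\<integral>w. 1 \<partial>\<mu>) = (1::real)" "(\<integral>w. (trunc_dist \<rho> R A w)\<^sup>2 \<partial>\<mu>) \<le> \<sigma>\<^sup>2"
proof -
  have sets: "sets \<mu> = sets \<nu>" and "prob_space \<mu>"
    and nn: "(\<integral>\<^sup>+w. ennreal ((trunc_dist \<rho> R A w)\<^sup>2) \<partial>\<mu>) \<le> ennreal (\<sigma>\<^sup>2)"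
    using feasible by (auto simp: maxent_feasible_def)
  interpret prob_space \<mu> by fact
  show "(\<integral>w. 1 \<partial>\<mu>) = (1::real)"
    by (simp add: prob_space)
  have space: "space \<mu> = space \<nu>"
    using sets by (rule sets_eq_imp_space_eq)
  have "integrable \<mu> (\<lambda>w. (trunc_dist \<rho> R A w)\<^sup>2)"
    using g sets space by (intro integrable_const_bound[where B=K]) (auto cong: measurable_cong_sets)
  then have "ennreal (\<integral>w. (trunc_dist \<rho> R A w)\<^sup>2 \<partial>\<mu>) \<le> ennreal (\<sigma>\<^sup>2)"
    using nn by (simp add: nn_integral_eq_integral)
  then have "(\<integral>w. (trunc_dist \<rho> R A w)\<^sup>2 \<partial>\<mu>) \<le> \<sigma>\<^sup>2"
    by (auto simp: ennreal_le_iff2)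
  then show "(\<integral>w. (trunc_dist \<rho> R A w)\<^sup>2 \<partial>\<mu>) \<le> \<sigma>\<^sup>2"
    by simp
qed

section \<open>Limits of integrals\<close>

definition concentrated_density :: "real set \<Rightarrow> real \<Rightarrow> real \<Rightarrow> (real \<Rightarrow> real) \<Rightarrow> bool" where
  "concentrated_density S R s q \<longleftrightarrow> q \<in> borel_measurable borel \<and> (\<forall>t\<in>S. 0 \<le> q t) \<and>
     integrable lborel (\<lambda>t. indicator S t * q t) \<and> (\<integral>t. indicator S t * q t \<partial>lborel) = 1 \<and>
     (\<integral>t. indicator S t * q t * (min \<bar>t\<bar> R)\<^sup>2 \<partial>lborel) \<le> s"

lemma integrable_concentrated_density_mult:
  fixes q h :: "real \<Rightarrow> real"
  assumes S: "S \<in> sets borel" and q: "concentrated_density S R s q"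
    and h: "h \<in> borel_measurable borel" "\<And>t. t \<in> S \<Longrightarrow> \<bar>h t\<bar> \<le> C"
  shows "integrable lborel (\<lambda>t. indicator S t * q t * h t)"
proof (rule Bochner_Integration.integrable_bound[where f="\<lambda>t. \<bar>C\<bar> * (indicator S t * q t)"])
  show "integrable lborel (\<lambda>t. \<bar>C\<bar> * (indicator S t * q t))"
    using q by (simp add: concentrated_density_def)
  have "(\<lambda>t. indicator S t :: real) \<in> borel_measurable borel" "q \<in> borel_measurable borel"
    using S q by (simp_all add: concentrated_density_def)
  then show "(\<lambda>t. indicator S t * q t * h t) \<in> borel_measurable lborel"
    using h(1) by simp
  show "AE t in lborel. norm (indicator S t * q t * h t) \<le> norm (\<bar>C\<bar> * (indicator S t * q t))"
  proof (rule AE_I2)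
    fix t
    show "norm (indicator S t * q t * h t) \<le> norm (\<bar>C\<bar> * (indicator S t * q t))"
    proof (cases "t \<in> S")
      case True
      then have "0 \<le> q t"
        using q by (simp add: concentrated_density_def)
      moreover have "\<bar>h t\<bar> \<le> \<bar>C\<bar>"
        using h(2)[OF True] by linarith
      ultimately have "q t * \<bar>h t\<bar> \<le> q t * \<bar>C\<bar>"
        by (intro mult_left_mono)
      with True \<open>0 \<le> q t\<close> show ?thesis
        by (simp add: abs_mult mult.commute)
    qed simp
  qed
qed

lemma abs_diff_le_truncated_square:
  fixes H c B t \<delta> R \<epsilon> :: real
  assumes H: "\<bar>H\<bar> \<le> B" "\<bar>c\<bar> \<le> B" and near: "\<bar>t\<bar> < \<delta> \<Longrightarrow> \<bar>H - c\<bar> \<le> \<epsilon>"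
    and \<delta>: "0 < \<delta>" and R: "0 < R" and \<epsilon>: "0 \<le> \<epsilon>"
  shows "\<bar>H - c\<bar> \<le> \<epsilon> + 2 * B / (min \<delta> R)\<^sup>2 * (min \<bar>t\<bar> R)\<^sup>2"
proof (cases "\<bar>t\<bar> < \<delta>")
  case True
  have "0 \<le> 2 * B / (min \<delta> R)\<^sup>2 * (min \<bar>t\<bar> R)\<^sup>2"
    using H by simp
  then show ?thesis
    using near[OF True] by linarith
next
  case False
  define m where "m = min \<delta> R"
  have m: "0 < m" "m\<^sup>2 \<le> (min \<bar>t\<bar> R)\<^sup>2"
    using \<delta> R False by (auto simp: m_def intro!: power_mono)
  have "2 * B = 2 * B / m\<^sup>2 * m\<^sup>2"
    using m by simp
  also have "\<dots> \<le> 2 * B / m\<^sup>2 * (min \<bar>t\<bar> R)\<^sup>2"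
    using m H by (intro mult_left_mono) auto
  finally show ?thesis
    using H \<epsilon> unfolding m_def by linarith
qed

lemma concentration_bound:
  fixes q H :: "real \<Rightarrow> real" and S :: "real set"
  assumes S: "S \<in> sets borel" and q: "concentrated_density S R s q"
    and H: "H \<in> borel_measurable borel" "\<And>t. t \<in> S \<Longrightarrow> \<bar>H t\<bar> \<le> B" "\<bar>c\<bar> \<le> B"
    and near: "\<And>t. t \<in> S \<Longrightarrow> \<bar>t\<bar> < \<delta> \<Longrightarrow> \<bar>H t - c\<bar> \<le> \<epsilon>"
    and \<delta>: "0 < \<delta>" and R: "0 < R" and \<epsilon>: "0 \<le> \<epsilon>"
  shows "\<bar>(\<integral>t. indicator S t * q t * H t \<partial>lborel) - c\<bar> \<le> \<epsilon> + 2 * B * s / (min \<delta> R)\<^sup>2"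
proof -
  have q_nonneg: "\<And>t. t \<in> S \<Longrightarrow> 0 \<le> q t" and q_int: "integrable lborel (\<lambda>t. indicator S t * q t)"
    and q_total: "(\<integral>t. indicator S t * q t \<partial>lborel) = 1"
    and spread: "(\<integral>t. indicator S t * q t * (min \<bar>t\<bar> R)\<^sup>2 \<partial>lborel) \<le> s"
    using q by (auto simp: concentrated_density_def)
  define K where "K = 2 * B / (min \<delta> R)\<^sup>2"
  have K: "0 \<le> K"
    using H(3) by (simp add: K_def)
  have int_H: "integrable lborel (\<lambda>t. indicator S t * q t * H t)"
    using S q H(1,2) by (rule integrable_concentrated_density_mult)
  have "\<bar>(min \<bar>t\<bar> R)\<^sup>2\<bar> \<le> R\<^sup>2" for t
    using R by (simp add: power_mono)
  then have int_spread: "integrable lborel (\<lambda>t. indicator S t * q t * (min \<bar>t\<bar> R)\<^sup>2)"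
    using S q by (intro integrable_concentrated_density_mult) auto
  have bound_eq: "(\<lambda>t. indicator S t * q t * (\<epsilon> + K * (min \<bar>t\<bar> R)\<^sup>2))
      = (\<lambda>t. \<epsilon> * (indicator S t * q t) + K * (indicator S t * q t * (min \<bar>t\<bar> R)\<^sup>2))"
    by (simp add: fun_eq_iff distrib_left)
  have "(\<integral>t. indicator S t * q t * H t \<partial>lborel) - c = (\<integral>t. indicator S t * q t * (H t - c) \<partial>lborel)"
    using int_H q_int q_total by (simp add: right_diff_distrib)
  also have "\<bar>\<dots>\<bar> \<le> (\<integral>t. indicator S t * q t * (\<epsilon> + K * (min \<bar>t\<bar> R)\<^sup>2) \<partial>lborel)"
  proof (rule integral_abs_bound_integral)
    show "integrable lborel (\<lambda>t. indicator S t * q t * (H t - c))"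
      using int_H q_int by (simp add: right_diff_distrib)
    show "integrable lborel (\<lambda>t. indicator S t * q t * (\<epsilon> + K * (min \<bar>t\<bar> R)\<^sup>2))"
      unfolding bound_eq using q_int int_spread by simp
    fix t
    have "\<bar>H t - c\<bar> \<le> \<epsilon> + K * (min \<bar>t\<bar> R)\<^sup>2" if "t \<in> S"
      unfolding K_def using H(2)[OF that] H(3) near[OF that] \<delta> R \<epsilon> by (rule abs_diff_le_truncated_square)
    then show "\<bar>indicator S t * q t * (H t - c)\<bar> \<le> indicator S t * q t * (\<epsilon> + K * (min \<bar>t\<bar> R)\<^sup>2)"
      using q_nonneg by (cases "t \<in> S") (simp_all add: abs_mult mult_left_mono)
  qed
  also have "\<dots> = \<epsilon> + K * (\<integral>t. indicator S t * q t * (min \<bar>t\<bar> R)\<^sup>2 \<partial>lborel)"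
    unfolding bound_eq using q_int q_total int_spread by simp
  also have "\<dots> \<le> \<epsilon> + K * s"
    using spread K by (intro add_left_mono mult_left_mono)
  finally show ?thesis
    by (simp add: K_def)
qed

lemma tendsto_at_right_0_of_bound:
  fixes X :: "real \<Rightarrow> real"
  assumes bound: "\<And>\<epsilon>. 0 < \<epsilon> \<Longrightarrow> \<exists>C. \<forall>\<sigma>>0. \<bar>X \<sigma> - c\<bar> \<le> \<epsilon> + C * \<sigma>\<^sup>2"
  shows "(X \<longlongrightarrow> c) (at_right 0)"
proof (rule tendstoI)
  fix e :: real assume e: "0 < e"
  obtain C where C: "\<And>\<sigma>. 0 < \<sigma> \<Longrightarrow> \<bar>X \<sigma> - c\<bar> \<le> e / 2 + C * \<sigma>\<^sup>2"
    using bound[of "e / 2"] e by auto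
  have "((\<lambda>\<sigma>. C * \<sigma>\<^sup>2) \<longlongrightarrow> C * 0\<^sup>2) (at_right 0)"
    by (intro tendsto_intros)
  then have "\<forall>\<^sub>F \<sigma> in at_right 0. C * \<sigma>\<^sup>2 < e / 2"
    using e by (intro order_tendstoD) auto
  moreover have "\<forall>\<^sub>F \<sigma> in at_right 0. (0::real) < \<sigma>"
    by (simp add: eventually_at_right_less)
  ultimately show "\<forall>\<^sub>F \<sigma> in at_right 0. dist (X \<sigma>) c < e"
    by eventually_elim (use C in \<open>fastforce simp: dist_real_def\<close>)
qed

lemma tendsto_concentrating_integrals:
  fixes S :: "real set" and H X :: "real \<Rightarrow> real"
  assumes S: "S \<in> sets borel" "0 \<in> S" and R: "0 < R"
    and H: "H \<in> borel_measurable borel" "\<And>t. t \<in> S \<Longrightarrow> \<bar>H t\<bar> \<le> B" "(H \<longlongrightarrow> H 0) (at 0 within S)"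
    and marginal: "\<And>\<sigma>. 0 < \<sigma> \<Longrightarrow>
      \<exists>q. concentrated_density S R (\<sigma>\<^sup>2) q \<and> X \<sigma> = (\<integral>t. indicator S t * q t * H t \<partial>lborel)"
  shows "(X \<longlongrightarrow> H 0) (at_right 0)"
proof (rule tendsto_at_right_0_of_bound)
  fix \<epsilon> :: real assume \<epsilon>: "0 < \<epsilon>"
  have "\<forall>\<^sub>F t in at 0 within S. dist (H t) (H 0) < \<epsilon>"
    using H(3) \<epsilon> by (rule tendstoD)
  then obtain \<delta> where \<delta>: "0 < \<delta>" "\<And>t. t \<in> S \<Longrightarrow> t \<noteq> 0 \<Longrightarrow> dist t 0 < \<delta> \<Longrightarrow> dist (H t) (H 0) < \<epsilon>"
    unfolding eventually_at by blast
  have near: "\<bar>H t - H 0\<bar> \<le> \<epsilon>" if "t \<in> S" "\<bar>t\<bar> < \<delta>" for t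
    using \<delta>(2)[OF that(1)] that(2) \<epsilon> by (cases "t = 0") (auto simp: dist_real_def)
  show "\<exists>C. \<forall>\<sigma>>0. \<bar>X \<sigma> - H 0\<bar> \<le> \<epsilon> + C * \<sigma>\<^sup>2"
  proof (intro exI allI impI)
    fix \<sigma> :: real assume "0 < \<sigma>"
    then obtain q where q: "concentrated_density S R (\<sigma>\<^sup>2) q"
      and X: "X \<sigma> = (\<integral>t. indicator S t * q t * H t \<partial>lborel)"
      using marginal by blast
    have "\<bar>X \<sigma> - H 0\<bar> \<le> \<epsilon> + 2 * B * \<sigma>\<^sup>2 / (min \<delta> R)\<^sup>2"
      unfolding X using H(2)[OF S(2)] \<epsilon>
      by (intro concentration_bound[OF S(1) q H(1,2) _ near \<delta>(1) R]) auto
    then show "\<bar>X \<sigma> - H 0\<bar> \<le> \<epsilon> + 2 * B / (min \<delta> R)\<^sup>2 * \<sigma>\<^sup>2"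
      by simp
  qed
qed

lemma metric_continuous_tendsto:
  assumes f: "metric_continuous \<rho> W f" and x: "x \<in> W"
    and \<gamma>_in: "\<forall>\<^sub>F t in F. \<gamma> t \<in> W" and \<gamma>_lim: "((\<lambda>t. \<rho> x (\<gamma> t)) \<longlongrightarrow> 0) F"
  shows "((\<lambda>t. f (\<gamma> t)) \<longlongrightarrow> f x) F"
proof (rule tendstoI)
  fix e :: real assume "0 < e"
  then obtain d where d: "0 < d" "\<And>y. y \<in> W \<Longrightarrow> \<rho> x y < d \<Longrightarrow> \<bar>f y - f x\<bar> < e"
    using f x unfolding metric_continuous_def by blast
  from tendstoD[OF \<gamma>_lim d(1)] have "\<forall>\<^sub>F t in F. \<rho> x (\<gamma> t) < d"
    by (rule eventually_mono) (simp add: dist_real_def)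
  with \<gamma>_in show "\<forall>\<^sub>F t in F. dist (f (\<gamma> t)) (f x) < e"
    by eventually_elim (simp add: d(2) dist_real_def)
qed

lemma tendsto_zero_if_le_abs:
  fixes g :: "real \<Rightarrow> real"
  assumes "\<And>t. t \<in> T \<Longrightarrow> 0 \<le> g t" "\<And>t. t \<in> T \<Longrightarrow> g t \<le> \<bar>t - t0\<bar>"
  shows "(g \<longlongrightarrow> 0) (at t0 within T)"
proof (rule tendsto_sandwich[where f="\<lambda>_. 0" and h="\<lambda>t. \<bar>t - t0\<bar>"])
  show "\<forall>\<^sub>F t in at t0 within T. 0 \<le> g t" "\<forall>\<^sub>F t in at t0 within T. g t \<le> \<bar>t - t0\<bar>"
    unfolding eventually_at_filter using assms by (auto intro: always_eventually)
  have "((\<lambda>t. t - t0) \<longlongrightarrow> t0 - t0) (at t0 within T)"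
    by (intro tendsto_diff tendsto_ident_at tendsto_const)
  from tendsto_rabs[OF this] show "((\<lambda>t. \<bar>t - t0\<bar>) \<longlongrightarrow> 0) (at t0 within T)"
    by simp
qed simp

lemma tendsto_integral_at_within:
  fixes u :: "real \<Rightarrow> 'a \<Rightarrow> real"
  assumes meas: "\<And>t. u t \<in> borel_measurable M" "u0 \<in> borel_measurable M"
    and w: "integrable M w" and bound: "\<And>t y. t \<in> T \<Longrightarrow> y \<in> space M \<Longrightarrow> \<bar>u t y\<bar> \<le> w y"
    and lim: "\<And>y. y \<in> space M \<Longrightarrow> ((\<lambda>t. u t y) \<longlongrightarrow> u0 y) (at t0 within T)"
  shows "((\<lambda>t. \<integral>y. u t y \<partial>M) \<longlongrightarrow> (\<integral>y. u0 y \<partial>M)) (at t0 within T)"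
  unfolding tendsto_at_iff_sequentially comp_def
proof (intro allI impI)
  fix X :: "nat \<Rightarrow> real" assume X: "\<forall>i. X i \<in> T - {t0}" "X \<longlonglongrightarrow> t0"
  show "(\<lambda>i. \<integral>y. u (X i) y \<partial>M) \<longlonglongrightarrow> (\<integral>y. u0 y \<partial>M)"
  proof (rule integral_dominated_convergence[where w=w])
    show "AE y in M. (\<lambda>i. u (X i) y) \<longlonglongrightarrow> u0 y"
      using lim X by (auto intro!: AE_I2 simp: tendsto_at_iff_sequentially comp_def)
    show "AE y in M. norm (u (X i) y) \<le> w y" for i
      using bound X by (auto intro!: AE_I2)
  qed (use meas w in auto)
qed

section \<open>The sphere in latitude-longitude coordinates\<close>

lemma abs_diff_round_le: "\<bar>y - of_int (round y)\<bar> \<le> \<bar>y - of_int n\<bar>" for y :: real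
proof (cases "\<bar>y - of_int n\<bar> < 1/2")
  case True
  then have "round y = n"
    by (rule round_unique')
  then show ?thesis
    by simp
next
  case False
  then show ?thesis
    using of_int_round_abs_le[of y] by linarith
qed

lemma per_mod_nonneg: "0 \<le> per_mod x p"
  by (simp add: per_mod_def)

lemma per_mod_le:
  assumes p: "0 < p"
  shows "per_mod x p \<le> \<bar>x - p * of_int n\<bar>"
proof -
  have scale: "\<bar>x - p * r\<bar> = p * \<bar>x / p - r\<bar>" for r
  proof -
    have "x - p * r = p * (x / p - r)"
      using p by (simp add: field_simps)
    then show ?thesis
      using p by (simp add: abs_mult)
  qed
  show ?thesis
    unfolding per_mod_def scale using p abs_diff_round_le by (intro mult_left_mono) auto
qed

lemma per_mod_le_abs: "0 < p \<Longrightarrow> per_mod x p \<le> \<bar>x\<bar>"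
  using per_mod_le[of p x 0] by simp

lemma per_mod_eqI:
  assumes p: "0 < p" and lower: "\<And>n::int. v \<le> \<bar>x - p * of_int n\<bar>" and attained: "v = \<bar>x - p * of_int m\<bar>"
  shows "per_mod x p = v"
  using per_mod_le[OF p, of x m] lower[of "round (x / p)"] attained by (simp add: per_mod_def)

lemma per_mod_eq_abs:
  assumes p: "0 < p" and x: "\<bar>x\<bar> \<le> p / 2"
  shows "per_mod x p = \<bar>x\<bar>"
proof (rule per_mod_eqI[OF p, where m=0])
  fix n :: int
  show "\<bar>x\<bar> \<le> \<bar>x - p * of_int n\<bar>"
  proof (cases "n = 0")
    case False
    then have "p * 1 \<le> \<bar>p * of_int n\<bar>"
      using p by (simp add: abs_mult)
    moreover have "\<bar>p * of_int n\<bar> \<le> \<bar>x - p * of_int n\<bar> + \<bar>x\<bar>"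
      using abs_triangle_ineq[of "p * of_int n - x" x] by (simp add: abs_minus_commute)
    ultimately show ?thesis
      using x by linarith
  qed simp
qed simp

lemma per_mod_add_period:
  assumes p: "0 < p"
  shows "per_mod (x + p * of_int k) p = per_mod x p"
proof (rule antisym)
  have "\<bar>x + p * of_int k - p * of_int (round (x / p) + k)\<bar> = per_mod x p"
    by (simp add: per_mod_def right_diff_distrib distrib_left)
  then show "per_mod (x + p * of_int k) p \<le> per_mod x p"
    using per_mod_le[OF p, of "x + p * of_int k" "round (x / p) + k"] by simp
  have "\<bar>x - p * of_int (round ((x + p * of_int k) / p) - k)\<bar> = per_mod (x + p * of_int k) p"
    by (simp add: per_mod_def right_diff_distrib distrib_left)
  then show "per_mod x p \<le> per_mod (x + p * of_int k) p"
    using per_mod_le[OF p, of x "round ((x + p * of_int k) / p) - k"] by simp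
qed

lemma per_mod_shift_half:
  assumes p: "0 < p" and x: "\<bar>x\<bar> \<le> p / 2"
  shows "per_mod (x - p / 2) p = p / 2 - \<bar>x\<bar>"
proof (cases "x \<le> 0")
  case True
  have "x - p / 2 + p * of_int 1 = x + p / 2"
    by simp
  then have "per_mod (x - p / 2) p = per_mod (x + p / 2) p"
    using per_mod_add_period[OF p, of "x - p / 2" 1] by (simp add: ac_simps)
  also have "\<dots> = \<bar>x + p / 2\<bar>"
    using p x True by (intro per_mod_eq_abs) auto
  finally show ?thesis
    using x True by simp
next
  case False
  then show ?thesis
    using p x by (subst per_mod_eq_abs) auto
qed

lemma per_mod_fst_le_dS2: "per_mod (fst a - fst b) pi \<le> dS2 a b"
  unfolding dS2_def using real_sqrt_ge_abs1 by (simp add: per_mod_nonneg)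

lemma per_mod_snd_le_dS2: "per_mod (snd a - snd b) (2 * pi) \<le> dS2 a b"
  unfolding dS2_def using real_sqrt_ge_abs2 by (simp add: per_mod_nonneg)

lemma dS2_nonneg: "0 \<le> dS2 a b"
  by (simp add: dS2_def)

lemma dS2_same_snd: "dS2 (x, t) (y, t) = per_mod (x - y) pi"
  using per_mod_le_abs[of "2 * pi" 0] per_mod_nonneg[of 0 "2 * pi"] per_mod_nonneg[of "x - y" pi]
  by (simp add: dS2_def)

lemma dS2_same_fst: "dS2 (x, t) (x, u) = per_mod (t - u) (2 * pi)"
  using per_mod_le_abs[of pi 0] per_mod_nonneg[of 0 pi] per_mod_nonneg[of "t - u" "2 * pi"]
  by (simp add: dS2_def)

lemma dS2_le_dist: "dS2 a b \<le> dist a b"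
proof -
  have "(per_mod (fst a - fst b) pi)\<^sup>2 \<le> (dist (fst a) (fst b))\<^sup>2"
    using per_mod_le_abs[of pi "fst a - fst b"] by (intro power_mono) (simp_all add: per_mod_nonneg dist_real_def)
  moreover have "(per_mod (snd a - snd b) (2 * pi))\<^sup>2 \<le> (dist (snd a) (snd b))\<^sup>2"
    using per_mod_le_abs[of "2 * pi" "snd a - snd b"] by (intro power_mono) (simp_all add: per_mod_nonneg dist_real_def)
  ultimately show ?thesis
    unfolding dS2_def dist_prod_def by (intro real_sqrt_le_mono) simp
qed

lemma mem_W_S2_iff: "x \<in> W_S2 \<longleftrightarrow> - pi / 2 < fst x \<and> fst x < pi / 2 \<and> - pi < snd x \<and> snd x \<le> pi"
  by (cases x) (auto simp: W_S2_def)

lemma dist_to_set_equator: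
  assumes w: "w \<in> W_S2"
  shows "dist_to_set dS2 equator w = \<bar>fst w\<bar>"
  unfolding dist_to_set_def
proof (rule cInf_eq_minimum)
  have "dS2 w (0, snd w) = \<bar>fst w\<bar>"
    using dS2_same_snd[of "fst w" "snd w" 0] per_mod_eq_abs[of pi "fst w"] w
    by (cases w) (auto simp: mem_W_S2_iff)
  moreover have "(0, snd w) \<in> equator"
    using w by (auto simp: equator_def mem_W_S2_iff)
  ultimately show "\<bar>fst w\<bar> \<in> dS2 w ` equator"
    by force
next
  fix d assume "d \<in> dS2 w ` equator"
  then obtain a where "a \<in> equator" "d = dS2 w a"
    by auto
  then show "\<bar>fst w\<bar> \<le> d"
    using per_mod_fst_le_dS2[of w a] per_mod_eq_abs[of pi "fst w"] w
    by (auto simp: equator_def mem_W_S2_iff)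
qed

definition meridian_dist :: "real \<Rightarrow> real" where
  "meridian_dist \<theta> = min \<bar>\<theta>\<bar> (pi - \<bar>\<theta>\<bar>)"

lemma dist_to_set_meridians:
  assumes w: "w \<in> W_S2"
  shows "dist_to_set dS2 meridians w = meridian_dist (snd w)"
  unfolding dist_to_set_def
proof (rule cInf_eq_minimum)
  have to_0: "dS2 w (fst w, 0) = \<bar>snd w\<bar>"
    using dS2_same_fst[of "fst w" "snd w" 0] per_mod_eq_abs[of "2 * pi" "snd w"] w
    by (cases w) (auto simp: mem_W_S2_iff)
  have to_pi: "dS2 w (fst w, pi) = pi - \<bar>snd w\<bar>"
    using dS2_same_fst[of "fst w" "snd w" pi] per_mod_shift_half[of "2 * pi" "snd w"] w
    by (cases w) (auto simp: mem_W_S2_iff)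
  have mem: "(fst w, 0) \<in> meridians" "(fst w, pi) \<in> meridians"
    using w by (auto simp: meridians_def mem_W_S2_iff)
  then show "meridian_dist (snd w) \<in> dS2 w ` meridians"
    unfolding meridian_dist_def min_def
    using rev_image_eqI[where f="dS2 w", OF mem(1) to_0[symmetric]] rev_image_eqI[where f="dS2 w", OF mem(2) to_pi[symmetric]]
    by simp
next
  fix d assume "d \<in> dS2 w ` meridians"
  then obtain a where "a \<in> meridians" "d = dS2 w a"
    by auto
  then show "meridian_dist (snd w) \<le> d"
    using per_mod_snd_le_dS2[of w a] per_mod_eq_abs[of "2 * pi" "snd w"]
      per_mod_shift_half[of "2 * pi" "snd w"] w
    by (auto simp: meridians_def mem_W_S2_iff meridian_dist_def)
qed

abbreviation lat_range :: "real set" where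
  "lat_range \<equiv> {- pi / 2<..<pi / 2}"

abbreviation lon_range :: "real set" where
  "lon_range \<equiv> {- pi<..pi}"

lemma W_S2_eq: "W_S2 = lat_range \<times> lon_range"
  by (simp add: W_S2_def)

lemma zero_in_lat_range: "0 \<in> lat_range"
  by (simp add: pi_gt_zero)

lemma zero_zero_in_W_S2: "(0, 0) \<in> W_S2"
  by (simp add: W_S2_def)

lemma measurable_fst_borel [measurable]: "fst \<in> borel_measurable (borel :: (real \<times> real) measure)"
  by (intro borel_measurable_continuous_onI continuous_intros)

lemma measurable_snd_borel [measurable]: "snd \<in> borel_measurable (borel :: (real \<times> real) measure)"
  by (intro borel_measurable_continuous_onI continuous_intros)

lemma W_S2_sets [measurable]: "W_S2 \<in> sets (borel :: (real \<times> real) measure)"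
  unfolding W_S2_eq by (intro borel_Times) auto

lemma space_M_S2 [simp]: "space M_S2 = W_S2"
  by (simp add: M_S2_def space_restrict_space)

lemma sets_nu_S2 [simp]: "sets nu_S2 = sets M_S2"
  by (simp add: nu_S2_def)

lemma space_nu_S2 [simp]: "space nu_S2 = W_S2"
  by (simp add: nu_S2_def)

lemma measurable_nu_S2 [simp]: "measurable nu_S2 N = measurable M_S2 N"
  by (rule measurable_cong_sets) auto

lemma borel_measurable_M_S2I: "f \<in> borel_measurable borel \<Longrightarrow> f \<in> borel_measurable M_S2"
  unfolding M_S2_def by (rule measurable_restrict_space1) simp

lemma measurable_fst_M_S2 [measurable]: "fst \<in> borel_measurable M_S2"
  by (rule borel_measurable_M_S2I) simp

lemma measurable_snd_M_S2 [measurable]: "snd \<in> borel_measurable M_S2"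
  by (rule borel_measurable_M_S2I) simp

lemma measurable_dist_to_set_equator [measurable]: "dist_to_set dS2 equator \<in> borel_measurable M_S2"
proof -
  have "(\<lambda>x. \<bar>fst x\<bar>) \<in> borel_measurable M_S2"
    by measurable
  then show ?thesis
    by (subst measurable_cong[where g="\<lambda>x. \<bar>fst x\<bar>"]) (auto simp: dist_to_set_equator)
qed

lemma measurable_meridian_dist [measurable]: "meridian_dist \<in> borel_measurable borel"
  unfolding meridian_dist_def[abs_def] by measurable

lemma measurable_dist_to_set_meridians [measurable]: "dist_to_set dS2 meridians \<in> borel_measurable M_S2"
proof -
  have "(\<lambda>x. meridian_dist (snd x)) \<in> borel_measurable M_S2"
    by measurable
  then show ?thesis
    by (subst measurable_cong[where g="\<lambda>x. meridian_dist (snd x)"]) (auto simp: dist_to_set_meridians)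
qed

lemma borel_measurable_M_S2_iff:
  "u \<in> borel_measurable M_S2 \<longleftrightarrow> (\<lambda>x. indicator W_S2 x * u x) \<in> borel_measurable borel"
  for u :: "real \<times> real \<Rightarrow> real"
  unfolding M_S2_def by (subst borel_measurable_restrict_space_iff) auto

lemma measurable_slice_snd:
  fixes u :: "real \<times> real \<Rightarrow> real"
  assumes "u \<in> borel_measurable borel"
  shows "(\<lambda>\<theta>. u (\<phi>, \<theta>)) \<in> borel_measurable borel"
proof -
  have "(\<lambda>\<theta>::real. (\<phi>, \<theta>)) \<in> borel_measurable borel"
    by (intro borel_measurable_continuous_onI continuous_intros)
  from measurable_compose[OF this assms] show ?thesis .
qed

lemma measurable_slice_fst:
  fixes u :: "real \<times> real \<Rightarrow> real"
  assumes "u \<in> borel_measurable borel"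
  shows "(\<lambda>\<phi>. u (\<phi>, \<theta>)) \<in> borel_measurable borel"
proof -
  have "(\<lambda>\<phi>::real. (\<phi>, \<theta>)) \<in> borel_measurable borel"
    by (intro borel_measurable_continuous_onI continuous_intros)
  from measurable_compose[OF this assms] show ?thesis .
qed

lemma emeasure_W_S2: "emeasure (lborel :: (real \<times> real) measure) W_S2 = ennreal (2 * pi * pi)"
proof -
  have "emeasure (lborel \<Otimes>\<^sub>M lborel) (lat_range \<times> lon_range) = emeasure lborel lat_range * emeasure lborel lon_range"
    by (intro lborel.emeasure_pair_measure_Times) auto
  also have "\<dots> = ennreal (2 * pi * pi)"
    by (simp add: ennreal_mult[symmetric] mult_ac)
  finally show ?thesis
    unfolding W_S2_eq lborel_prod .
qed

lemma cos_nonneg_lat: "\<phi> \<in> lat_range \<Longrightarrow> 0 \<le> cos \<phi>"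
  by (auto intro!: cos_ge_zero)

lemma integrable_cos_lat_range: "integrable lborel (\<lambda>\<phi>. indicator lat_range \<phi> * cos \<phi>)"
  by (rule integrableI_bounded_set[where A=lat_range and B=1]) (auto simp: indicator_def)

lemma integral_cos_lat_range: "(\<integral>\<phi>. indicator lat_range \<phi> * cos \<phi> \<partial>lborel) = 2"
proof -
  have "(LBINT \<phi>=- pi / 2..pi / 2. cos \<phi>) = sin (pi / 2) - sin (- pi / 2)"
    by (intro interval_integral_FTC_finite continuous_intros)
       (auto intro!: derivative_eq_intros simp: has_real_derivative_iff_has_vector_derivative[symmetric])
  then show ?thesis
    by (simp add: interval_lebesgue_integral_def set_lebesgue_integral_def)
qed

text \<open>The indicator of \<^const>\<open>W_S2\<close> makes both averages Borel measurable in the remaining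
  coordinate for every \<open>u\<close> that is only measurable on \<^const>\<open>W_S2\<close>.\<close>

definition lon_average :: "(real \<times> real \<Rightarrow> real) \<Rightarrow> real \<Rightarrow> real" where
  "lon_average u \<phi> = (\<integral>\<theta>. indicator W_S2 (\<phi>, \<theta>) * u (\<phi>, \<theta>) \<partial>lborel) / (2 * pi)"

definition lat_average :: "(real \<times> real \<Rightarrow> real) \<Rightarrow> real \<Rightarrow> real" where
  "lat_average u \<theta> = (\<integral>\<phi>. indicator W_S2 (\<phi>, \<theta>) * cos \<phi> * u (\<phi>, \<theta>) \<partial>lborel) / 2"

lemma lon_average_measurable [measurable]:
  assumes "u \<in> borel_measurable M_S2"
  shows "lon_average u \<in> borel_measurable borel"
proof -
  have "(\<lambda>x. indicator W_S2 x * u x) \<in> borel_measurable (lborel \<Otimes>\<^sub>M lborel)"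
    using assms unfolding lborel_prod by (simp add: borel_measurable_M_S2_iff)
  then have "case_prod (\<lambda>\<phi> \<theta>. indicator W_S2 (\<phi>, \<theta>) * u (\<phi>, \<theta>)) \<in> borel_measurable (lborel \<Otimes>\<^sub>M lborel)"
    by (simp add: case_prod_beta')
  from lborel.borel_measurable_lebesgue_integral[OF this]
  show ?thesis
    unfolding lon_average_def[abs_def] by simp
qed

lemma lat_average_measurable [measurable]:
  assumes "u \<in> borel_measurable M_S2"
  shows "lat_average u \<in> borel_measurable borel"
proof -
  have swap: "(\<lambda>y::real \<times> real. (snd y, fst y)) \<in> borel_measurable borel"
    by (intro borel_measurable_continuous_onI continuous_intros)
  have "(\<lambda>x. indicator W_S2 x * u x) \<in> borel_measurable borel"
    using assms by (simp add: borel_measurable_M_S2_iff)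
  from measurable_compose[OF swap this]
  have "(\<lambda>y. cos (snd y) * (indicator W_S2 (snd y, fst y) * u (snd y, fst y))) \<in> borel_measurable (lborel \<Otimes>\<^sub>M lborel)"
    unfolding lborel_prod by measurable
  then have "case_prod (\<lambda>\<theta> \<phi>. indicator W_S2 (\<phi>, \<theta>) * cos \<phi> * u (\<phi>, \<theta>)) \<in> borel_measurable (lborel \<Otimes>\<^sub>M lborel)"
    by (simp add: case_prod_beta' ac_simps)
  from lborel.borel_measurable_lebesgue_integral[OF this]
  show ?thesis
    unfolding lat_average_def[abs_def] by simp
qed

lemma bound_nonneg_W_S2: "(\<And>x. x \<in> W_S2 \<Longrightarrow> \<bar>u x\<bar> \<le> B) \<Longrightarrow> 0 \<le> B"
  for u :: "real \<times> real \<Rightarrow> real"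
  by (meson abs_ge_zero order_trans zero_zero_in_W_S2)

lemma integrable_lon_slice:
  fixes u :: "real \<times> real \<Rightarrow> real"
  assumes u: "u \<in> borel_measurable M_S2" "\<And>x. x \<in> W_S2 \<Longrightarrow> \<bar>u x\<bar> \<le> B"
  shows "integrable lborel (\<lambda>\<theta>. indicator W_S2 (\<phi>, \<theta>) * u (\<phi>, \<theta>))"
proof (rule integrableI_bounded_set[where A=lon_range and B=B])
  show "(\<lambda>\<theta>. indicator W_S2 (\<phi>, \<theta>) * u (\<phi>, \<theta>)) \<in> borel_measurable lborel"
    using measurable_slice_snd[of "\<lambda>x. indicator W_S2 x * u x"] u by (simp add: borel_measurable_M_S2_iff)
qed (use u bound_nonneg_W_S2[OF u(2)] in \<open>auto simp: W_S2_eq indicator_def\<close>)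

lemma integrable_lat_slice:
  fixes u :: "real \<times> real \<Rightarrow> real"
  assumes u: "u \<in> borel_measurable M_S2" "\<And>x. x \<in> W_S2 \<Longrightarrow> \<bar>u x\<bar> \<le> B"
  shows "integrable lborel (\<lambda>\<phi>. indicator W_S2 (\<phi>, \<theta>) * cos \<phi> * u (\<phi>, \<theta>))"
proof (rule integrableI_bounded_set[where A=lat_range and B=B])
  have "(\<lambda>\<phi>. cos \<phi> * (indicator W_S2 (\<phi>, \<theta>) * u (\<phi>, \<theta>))) \<in> borel_measurable borel"
    using measurable_slice_fst[of "\<lambda>x. indicator W_S2 x * u x"] u by (simp add: borel_measurable_M_S2_iff)
  then show "(\<lambda>\<phi>. indicator W_S2 (\<phi>, \<theta>) * cos \<phi> * u (\<phi>, \<theta>)) \<in> borel_measurable lborel"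
    by (simp add: ac_simps)
  show "AE \<phi> in lborel. \<phi> \<in> lat_range \<longrightarrow> norm (indicator W_S2 (\<phi>, \<theta>) * cos \<phi> * u (\<phi>, \<theta>)) \<le> B"
  proof (intro AE_I2 impI)
    fix \<phi> assume "\<phi> \<in> lat_range"
    have "\<bar>cos \<phi>\<bar> * \<bar>indicator W_S2 (\<phi>, \<theta>) * u (\<phi>, \<theta>)\<bar> \<le> 1 * B"
      using u(2)[of "(\<phi>, \<theta>)"] bound_nonneg_W_S2[OF u(2)] by (intro mult_mono) (auto simp: indicator_def)
    then show "norm (indicator W_S2 (\<phi>, \<theta>) * cos \<phi> * u (\<phi>, \<theta>)) \<le> B"
      by (simp add: abs_mult ac_simps)
  qed
qed (auto simp: W_S2_eq indicator_def)

lemma abs_lon_average_le: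
  fixes u :: "real \<times> real \<Rightarrow> real"
  assumes u: "u \<in> borel_measurable M_S2" "\<And>x. x \<in> W_S2 \<Longrightarrow> \<bar>u x\<bar> \<le> B"
  shows "\<bar>lon_average u \<phi>\<bar> \<le> B"
proof -
  have "\<bar>\<integral>\<theta>. indicator W_S2 (\<phi>, \<theta>) * u (\<phi>, \<theta>) \<partial>lborel\<bar> \<le> (\<integral>\<theta>. B * indicator lon_range \<theta> \<partial>lborel)"
  proof (rule integral_abs_bound_integral[OF integrable_lon_slice[OF u]])
    show "integrable lborel (\<lambda>\<theta>. B * indicator lon_range \<theta>)"
      by (intro integrable_mult_right integrable_real_indicator) auto
    fix \<theta>
    show "\<bar>indicator W_S2 (\<phi>, \<theta>) * u (\<phi>, \<theta>)\<bar> \<le> B * indicator lon_range \<theta>"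
      using u(2)[of "(\<phi>, \<theta>)"] bound_nonneg_W_S2[OF u(2)] by (auto simp: W_S2_eq indicator_def)
  qed
  then have "\<bar>\<integral>\<theta>. indicator W_S2 (\<phi>, \<theta>) * u (\<phi>, \<theta>) \<partial>lborel\<bar> \<le> B * (2 * pi)"
    by simp
  then show ?thesis
    unfolding lon_average_def by (simp add: abs_divide pos_divide_le_eq)
qed

lemma abs_lat_average_le:
  fixes u :: "real \<times> real \<Rightarrow> real"
  assumes u: "u \<in> borel_measurable M_S2" "\<And>x. x \<in> W_S2 \<Longrightarrow> \<bar>u x\<bar> \<le> B"
  shows "\<bar>lat_average u \<theta>\<bar> \<le> B"
proof -
  have "\<bar>\<integral>\<phi>. indicator W_S2 (\<phi>, \<theta>) * cos \<phi> * u (\<phi>, \<theta>) \<partial>lborel\<bar>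
      \<le> (\<integral>\<phi>. B * (indicator lat_range \<phi> * cos \<phi>) \<partial>lborel)"
  proof (rule integral_abs_bound_integral[OF integrable_lat_slice[OF u]])
    show "integrable lborel (\<lambda>\<phi>. B * (indicator lat_range \<phi> * cos \<phi>))"
      using integrable_cos_lat_range by simp
    fix \<phi>
    show "\<bar>indicator W_S2 (\<phi>, \<theta>) * cos \<phi> * u (\<phi>, \<theta>)\<bar> \<le> B * (indicator lat_range \<phi> * cos \<phi>)"
    proof (cases "(\<phi>, \<theta>) \<in> W_S2")
      case True
      then have "cos \<phi> * \<bar>u (\<phi>, \<theta>)\<bar> \<le> cos \<phi> * B"
        using u(2) cos_nonneg_lat by (intro mult_left_mono) (auto simp: W_S2_eq)
      with True show ?thesis
        using cos_nonneg_lat by (auto simp: W_S2_eq abs_mult ac_simps)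
    qed (use bound_nonneg_W_S2[OF u(2)] cos_nonneg_lat in \<open>auto simp: W_S2_eq indicator_def\<close>)
  qed
  then show ?thesis
    using integral_cos_lat_range by (simp add: lat_average_def)
qed

lemma lon_average_fst:
  assumes "\<And>x. x \<in> W_S2 \<Longrightarrow> u x = h (fst x)" and "\<phi> \<in> lat_range"
  shows "lon_average u \<phi> = h \<phi>"
proof -
  have "(\<integral>\<theta>. indicator W_S2 (\<phi>, \<theta>) * u (\<phi>, \<theta>) \<partial>lborel) = (\<integral>\<theta>. h \<phi> * indicator lon_range \<theta> \<partial>lborel)"
    using assms by (intro Bochner_Integration.integral_cong) (auto simp: W_S2_eq indicator_def)
  then show ?thesis
    by (simp add: lon_average_def)
qed

lemma lat_average_snd:
  assumes "\<And>x. x \<in> W_S2 \<Longrightarrow> u x = h (snd x)" and "\<theta> \<in> lon_range"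
  shows "lat_average u \<theta> = h \<theta>"
proof -
  have "(\<integral>\<phi>. indicator W_S2 (\<phi>, \<theta>) * cos \<phi> * u (\<phi>, \<theta>) \<partial>lborel)
      = (\<integral>\<phi>. h \<theta> * (indicator lat_range \<phi> * cos \<phi>) \<partial>lborel)"
    using assms by (intro Bochner_Integration.integral_cong) (auto simp: W_S2_eq indicator_def)
  then show ?thesis
    using integral_cos_lat_range by (simp add: lat_average_def)
qed

lemma lon_average_mult_fst: "lon_average (\<lambda>x. h (fst x) * u x) \<phi> = h \<phi> * lon_average u \<phi>"
proof -
  have "(\<lambda>\<theta>. indicator W_S2 (\<phi>, \<theta>) * (h \<phi> * u (\<phi>, \<theta>))) = (\<lambda>\<theta>. h \<phi> * (indicator W_S2 (\<phi>, \<theta>) * u (\<phi>, \<theta>)))"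
    by (simp add: fun_eq_iff ac_simps)
  then show ?thesis
    by (simp add: lon_average_def)
qed

lemma lat_average_mult_snd: "lat_average (\<lambda>x. h (snd x) * u x) \<theta> = h \<theta> * lat_average u \<theta>"
proof -
  have "(\<lambda>\<phi>. indicator W_S2 (\<phi>, \<theta>) * cos \<phi> * (h \<theta> * u (\<phi>, \<theta>)))
      = (\<lambda>\<phi>. h \<theta> * (indicator W_S2 (\<phi>, \<theta>) * cos \<phi> * u (\<phi>, \<theta>)))"
    by (simp add: fun_eq_iff ac_simps)
  then show ?thesis
    by (simp add: lat_average_def)
qed

lemma integral_nu_S2_pair:
  fixes u :: "real \<times> real \<Rightarrow> real"
  assumes u: "u \<in> borel_measurable M_S2" "\<And>x. x \<in> W_S2 \<Longrightarrow> \<bar>u x\<bar> \<le> B"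
  shows "integrable (lborel \<Otimes>\<^sub>M lborel) (\<lambda>x. indicator W_S2 x * cos (fst x) * u x)"
    and "(\<integral>x. u x \<partial>nu_S2) = (\<integral>x. indicator W_S2 x * cos (fst x) * u x \<partial>(lborel \<Otimes>\<^sub>M lborel)) / (4 * pi)"
proof -
  have "(\<lambda>x. indicator W_S2 x * u x) \<in> borel_measurable borel"
    using u(1) by (simp add: borel_measurable_M_S2_iff)
  then have "(\<lambda>x. cos (fst x) * (indicator W_S2 x * u x)) \<in> borel_measurable borel"
    by measurable
  then have meas: "(\<lambda>x. indicator W_S2 x * cos (fst x) * u x) \<in> borel_measurable borel"
    by (simp add: ac_simps)
  show "integrable (lborel \<Otimes>\<^sub>M lborel) (\<lambda>x. indicator W_S2 x * cos (fst x) * u x)"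
    unfolding lborel_prod
  proof (rule integrableI_bounded_set[where A=W_S2 and B=B])
    show "AE x in lborel. x \<in> W_S2 \<longrightarrow> norm (indicator W_S2 x * cos (fst x) * u x) \<le> B"
    proof (intro AE_I2 impI)
      fix x :: "real \<times> real" assume x: "x \<in> W_S2"
      have "\<bar>cos (fst x)\<bar> * \<bar>u x\<bar> \<le> 1 * B"
        using u(2)[OF x] by (intro mult_mono) auto
      with x show "norm (indicator W_S2 x * cos (fst x) * u x) \<le> B"
        by (simp add: abs_mult)
    qed
  qed (use meas emeasure_W_S2 in auto)
  have "(\<integral>x. u x \<partial>nu_S2) = (\<integral>x. cos (fst x) / (4 * pi) * u x \<partial>M_S2)"
    unfolding nu_S2_def using u(1)
    by (subst integral_density) (auto intro!: AE_I2 divide_nonneg_nonneg cos_ge_zero simp: W_S2_eq)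
  also have "\<dots> = (\<integral>x. indicator W_S2 x * cos (fst x) * u x / (4 * pi) \<partial>lborel)"
    unfolding M_S2_def by (subst integral_restrict_space) (auto intro!: Bochner_Integration.integral_cong)
  finally show "(\<integral>x. u x \<partial>nu_S2) = (\<integral>x. indicator W_S2 x * cos (fst x) * u x \<partial>(lborel \<Otimes>\<^sub>M lborel)) / (4 * pi)"
    by (simp add: lborel_prod)
qed

lemma integral_nu_S2_lon:
  fixes u :: "real \<times> real \<Rightarrow> real"
  assumes u: "u \<in> borel_measurable M_S2" "\<And>x. x \<in> W_S2 \<Longrightarrow> \<bar>u x\<bar> \<le> B"
  shows "(\<integral>x. u x \<partial>nu_S2) = (\<integral>\<phi>. indicator lat_range \<phi> * cos \<phi> * lon_average u \<phi> \<partial>lborel) / 2"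
proof -
  note pair = integral_nu_S2_pair[OF u]
  have "(\<integral>x. indicator W_S2 x * cos (fst x) * u x \<partial>(lborel \<Otimes>\<^sub>M lborel))
      = (\<integral>\<phi>. \<integral>\<theta>. indicator W_S2 (\<phi>, \<theta>) * cos \<phi> * u (\<phi>, \<theta>) \<partial>lborel \<partial>lborel)"
    using lborel_pair.integral_fst'[OF pair(1)] by simp
  also have "\<dots> = (\<integral>\<phi>. 2 * pi * (indicator lat_range \<phi> * cos \<phi> * lon_average u \<phi>) \<partial>lborel)"
  proof (intro Bochner_Integration.integral_cong refl)
    fix \<phi>
    have "(\<integral>\<theta>. indicator W_S2 (\<phi>, \<theta>) * cos \<phi> * u (\<phi>, \<theta>) \<partial>lborel)
        = cos \<phi> * (\<integral>\<theta>. indicator W_S2 (\<phi>, \<theta>) * u (\<phi>, \<theta>) \<partial>lborel)"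
      by (simp add: ac_simps)
    then show "(\<integral>\<theta>. indicator W_S2 (\<phi>, \<theta>) * cos \<phi> * u (\<phi>, \<theta>) \<partial>lborel)
        = 2 * pi * (indicator lat_range \<phi> * cos \<phi> * lon_average u \<phi>)"
      by (cases "\<phi> \<in> lat_range") (auto simp: lon_average_def W_S2_eq indicator_def)
  qed
  also have "\<dots> = 2 * pi * (\<integral>\<phi>. indicator lat_range \<phi> * cos \<phi> * lon_average u \<phi> \<partial>lborel)"
    by (rule integral_mult_right_zero)
  moreover have "2 * pi * I / (4 * pi) = I / 2" for I :: real
    by (simp add: field_simps)
  ultimately show ?thesis
    using pair(2) by (simp only:)
qed

lemma integral_nu_S2_lat:
  fixes u :: "real \<times> real \<Rightarrow> real"
  assumes u: "u \<in> borel_measurable M_S2" "\<And>x. x \<in> W_S2 \<Longrightarrow> \<bar>u x\<bar> \<le> B"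
  shows "(\<integral>x. u x \<partial>nu_S2) = (\<integral>\<theta>. indicator lon_range \<theta> * lat_average u \<theta> \<partial>lborel) / (2 * pi)"
proof -
  note pair = integral_nu_S2_pair[OF u]
  let ?f = "\<lambda>\<phi> \<theta>. indicator W_S2 (\<phi>, \<theta>) * cos \<phi> * u (\<phi>, \<theta>)"
  have "(\<lambda>x. indicator W_S2 x * cos (fst x) * u x) = case_prod ?f"
    by auto
  then have "(\<integral>x. indicator W_S2 x * cos (fst x) * u x \<partial>(lborel \<Otimes>\<^sub>M lborel))
      = (\<integral>\<theta>. \<integral>\<phi>. ?f \<phi> \<theta> \<partial>lborel \<partial>lborel)"
    using lborel_pair.integral_snd[of ?f] pair(1) by simp
  also have "\<dots> = (\<integral>\<theta>. 2 * (indicator lon_range \<theta> * lat_average u \<theta>) \<partial>lborel)"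
  proof (intro Bochner_Integration.integral_cong refl)
    fix \<theta>
    show "(\<integral>\<phi>. ?f \<phi> \<theta> \<partial>lborel) = 2 * (indicator lon_range \<theta> * lat_average u \<theta>)"
    proof (cases "\<theta> \<in> lon_range")
      case False
      then have "(\<lambda>\<phi>. ?f \<phi> \<theta>) = (\<lambda>_. 0)"
        by (simp add: fun_eq_iff W_S2_eq)
      with False show ?thesis
        by simp
    qed (simp add: lat_average_def)
  qed
  also have "\<dots> = 2 * (\<integral>\<theta>. indicator lon_range \<theta> * lat_average u \<theta> \<partial>lborel)"
    by (rule integral_mult_right_zero)
  moreover have "2 * I / (4 * pi) = I / (2 * pi)" for I :: real
    by (simp add: field_simps)
  ultimately show ?thesis
    using pair(2) by (simp only:)
qed

lemma prob_space_nu_S2: "prob_space nu_S2"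
proof -
  have "(\<integral>x. 1 \<partial>nu_S2) = (\<integral>\<phi>. indicator lat_range \<phi> * cos \<phi> * lon_average (\<lambda>_. 1) \<phi> \<partial>lborel) / 2"
    by (rule integral_nu_S2_lon[where B=1]) auto
  also have "\<dots> = (\<integral>\<phi>. indicator lat_range \<phi> * cos \<phi> \<partial>lborel) / 2"
    using lon_average_fst[of "\<lambda>_. 1" "\<lambda>_. 1"]
    by (intro arg_cong[where f="\<lambda>x. x / 2"] Bochner_Integration.integral_cong) (auto simp: indicator_def)
  finally have "measure nu_S2 (space nu_S2) = 1"
    using integral_cos_lat_range by simp
  then show ?thesis
    by (intro prob_spaceI) (auto simp: emeasure_eq_ennreal_measure measure_def)
qed

lemma integral_density_fst:
  fixes h u :: "_ \<Rightarrow> real"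
  assumes h: "h \<in> borel_measurable borel" "\<And>\<phi>. 0 \<le> h \<phi>" "\<And>\<phi>. h \<phi> \<le> C"
    and u: "u \<in> borel_measurable M_S2" "\<And>x. x \<in> W_S2 \<Longrightarrow> \<bar>u x\<bar> \<le> B"
  shows "(\<integral>x. u x \<partial>density nu_S2 (\<lambda>x. ennreal (h (fst x))))
    = (\<integral>\<phi>. indicator lat_range \<phi> * (cos \<phi> * h \<phi> / 2) * lon_average u \<phi> \<partial>lborel)"
proof -
  have "(\<integral>x. u x \<partial>density nu_S2 (\<lambda>x. ennreal (h (fst x)))) = (\<integral>x. h (fst x) * u x \<partial>nu_S2)"
    using h u by (subst integral_density) auto
  also have "\<dots> = (\<integral>\<phi>. indicator lat_range \<phi> * cos \<phi> * lon_average (\<lambda>x. h (fst x) * u x) \<phi> \<partial>lborel) / 2"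
  proof (rule integral_nu_S2_lon[where B="C * B"])
    fix x assume x: "x \<in> W_S2"
    have "h (fst x) * \<bar>u x\<bar> \<le> C * B"
      using h(2,3)[of "fst x"] u(2)[OF x] by (intro mult_mono) auto
    then show "\<bar>h (fst x) * u x\<bar> \<le> C * B"
      using h(2) by (simp add: abs_mult)
  qed (use h u in simp)
  also have "\<dots> = (\<integral>\<phi>. indicator lat_range \<phi> * cos \<phi> * (h \<phi> * lon_average u \<phi>) / 2 \<partial>lborel)"
    by (simp only: lon_average_mult_fst integral_divide_zero)
  also have "\<dots> = (\<integral>\<phi>. indicator lat_range \<phi> * (cos \<phi> * h \<phi> / 2) * lon_average u \<phi> \<partial>lborel)"
    by (intro Bochner_Integration.integral_cong refl) (simp add: field_simps)
  finally show ?thesis .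
qed

lemma integral_density_snd:
  fixes h u :: "_ \<Rightarrow> real"
  assumes h: "h \<in> borel_measurable borel" "\<And>\<theta>. 0 \<le> h \<theta>" "\<And>\<theta>. h \<theta> \<le> C"
    and u: "u \<in> borel_measurable M_S2" "\<And>x. x \<in> W_S2 \<Longrightarrow> \<bar>u x\<bar> \<le> B"
  shows "(\<integral>x. u x \<partial>density nu_S2 (\<lambda>x. ennreal (h (snd x))))
    = (\<integral>\<theta>. indicator lon_range \<theta> * (h \<theta> / (2 * pi)) * lat_average u \<theta> \<partial>lborel)"
proof -
  have "(\<integral>x. u x \<partial>density nu_S2 (\<lambda>x. ennreal (h (snd x)))) = (\<integral>x. h (snd x) * u x \<partial>nu_S2)"
    using h u by (subst integral_density) auto
  also have "\<dots> = (\<integral>\<theta>. indicator lon_range \<theta> * lat_average (\<lambda>x. h (snd x) * u x) \<theta> \<partial>lborel) / (2 * pi)"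
  proof (rule integral_nu_S2_lat[where B="C * B"])
    fix x assume x: "x \<in> W_S2"
    have "h (snd x) * \<bar>u x\<bar> \<le> C * B"
      using h(2,3)[of "snd x"] u(2)[OF x] by (intro mult_mono) auto
    then show "\<bar>h (snd x) * u x\<bar> \<le> C * B"
      using h(2) by (simp add: abs_mult)
  qed (use h u in simp)
  also have "\<dots> = (\<integral>\<theta>. indicator lon_range \<theta> * (h \<theta> * lat_average u \<theta>) / (2 * pi) \<partial>lborel)"
    by (simp only: lat_average_mult_snd integral_divide_zero)
  also have "\<dots> = (\<integral>\<theta>. indicator lon_range \<theta> * (h \<theta> / (2 * pi)) * lat_average u \<theta> \<partial>lborel)"
    by (intro Bochner_Integration.integral_cong refl) (simp add: field_simps)
  finally show ?thesis .
qed

lemma finite_measure_density_restrict_lborel: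
  fixes A :: "real set" and h :: "real \<Rightarrow> real"
  assumes A: "A \<in> sets borel" "emeasure lborel A < \<infinity>"
    and h: "h \<in> borel_measurable borel" "\<And>x. x \<in> A \<Longrightarrow> h x \<le> c"
  shows "finite_measure (density (restrict_space lborel A) (\<lambda>x. ennreal (h x)))"
proof (rule finite_measureI)
  let ?M = "restrict_space lborel A"
  have "emeasure (density ?M (\<lambda>x. ennreal (h x))) (space ?M) = (\<integral>\<^sup>+x. ennreal (h x) * indicator (space ?M) x \<partial>?M)"
    using h by (intro emeasure_density) (auto intro!: measurable_restrict_space1)
  also have "\<dots> \<le> (\<integral>\<^sup>+x. ennreal c \<partial>?M)"
    using h by (intro nn_integral_mono) (auto simp: space_restrict_space intro!: ennreal_leI)
  also have "\<dots> = ennreal c * emeasure lborel A"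
    using A by (simp add: emeasure_restrict_space space_restrict_space)
  also have "\<dots> < \<infinity>"
    using A by (simp add: ennreal_mult_less_top)
  finally show "emeasure (density ?M (\<lambda>x. ennreal (h x))) (space (density ?M (\<lambda>x. ennreal (h x)))) \<noteq> \<infinity>"
    by simp
qed

lemma measurable_id_pair_borel:
  assumes "(\<lambda>x. x) \<in> measurable A (borel :: real measure)" "(\<lambda>x. x) \<in> measurable B (borel :: real measure)"
  shows "(\<lambda>x. x) \<in> measurable (A \<Otimes>\<^sub>M B) (borel :: (real \<times> real) measure)"
proof -
  have "(\<lambda>x. x) \<in> measurable (A \<Otimes>\<^sub>M B) (borel \<Otimes>\<^sub>M borel)"
    unfolding measurable_pair_iff comp_def
    by (intro conjI measurable_compose[OF measurable_fst assms(1)] measurable_compose[OF measurable_snd assms(2)])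
  then show ?thesis
    unfolding borel_prod .
qed

lemma measurable_id_density_restrict_lborel:
  "(\<lambda>x. x) \<in> measurable (density (restrict_space lborel A) h) (borel :: real measure)"
  using measurable_restrict_space1[of "\<lambda>x. x" lborel borel A] by simp

lemma measurable_id_M_S2:
  assumes "(\<lambda>x. x) \<in> measurable M (borel :: (real \<times> real) measure)" "space M \<subseteq> W_S2"
  shows "(\<lambda>x. x) \<in> measurable M M_S2"
  unfolding M_S2_def using assms by (intro measurable_restrict_space2) auto

lemma integral_post_equator:
  fixes u :: "real \<times> real \<Rightarrow> real"
  assumes u: "u \<in> borel_measurable M_S2" "\<And>x. x \<in> W_S2 \<Longrightarrow> \<bar>u x\<bar> \<le> B"
  shows "(\<integral>x. u x \<partial>post_equator) = lon_average u 0"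
proof -
  define v where "v = (\<lambda>x. indicator W_S2 x * u x)"
  have v: "v \<in> borel_measurable borel" "\<And>x. \<bar>v x\<bar> \<le> B"
    using u borel_measurable_M_S2_iff bound_nonneg_W_S2[OF u(2)] by (auto simp: v_def indicator_def)
  let ?D = "density (restrict_space lborel lon_range) (\<lambda>_. ennreal (1 / (2 * pi)))"
  let ?P = "count_space {0::real} \<Otimes>\<^sub>M ?D"
  interpret D: finite_measure ?D
    by (rule finite_measure_density_restrict_lborel[where c="1 / (2 * pi)"]) auto
  interpret C: finite_measure "count_space {0::real}"
    by (rule finite_measure_count_space) simp
  interpret pair_sigma_finite "count_space {0::real}" ?D ..
  have id_borel: "(\<lambda>x. x) \<in> measurable ?P (borel :: (real \<times> real) measure)"
    by (intro measurable_id_pair_borel measurable_id_density_restrict_lborel) simp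
  have id_M_S2: "(\<lambda>x. x) \<in> measurable ?P M_S2"
    using id_borel by (intro measurable_id_M_S2) (auto simp: space_pair_measure space_restrict_space W_S2_def)
  have "integrable ?P v"
    using measurable_compose[OF id_borel v(1)] v(2)
    by (intro finite_measure.integrable_const_bound[where B=B] finite_measure_pair_measure
        D.finite_measure_axioms C.finite_measure_axioms) auto
  have "(\<integral>x. u x \<partial>post_equator) = (\<integral>x. v x \<partial>post_equator)"
    by (intro Bochner_Integration.integral_cong refl) (simp add: post_equator_def v_def)
  also have "\<dots> = (\<integral>x. v x \<partial>?P)"
    unfolding post_equator_def using id_M_S2 v(1) by (subst integral_distr) (auto intro: borel_measurable_M_S2I)
  also have "\<dots> = (\<integral>y. v (0, y) \<partial>?D)"
    using integral_fst'[OF \<open>integrable ?P v\<close>] by (simp add: lebesgue_integral_count_space_finite)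
  also have "\<dots> = (\<integral>y. (1 / (2 * pi)) *\<^sub>R v (0, y) \<partial>restrict_space lborel lon_range)"
    using measurable_slice_snd[OF v(1), of 0] by (subst integral_density) (auto intro!: measurable_restrict_space1)
  also have "\<dots> = (\<integral>y. indicator lon_range y *\<^sub>R ((1 / (2 * pi)) *\<^sub>R v (0, y)) \<partial>lborel)"
    by (subst integral_restrict_space) auto
  also have "\<dots> = (1 / (2 * pi)) * (\<integral>y. indicator lon_range y * v (0, y) \<partial>lborel)"
    by (simp add: mult_ac)
  also have "(\<lambda>y. indicator lon_range y * v (0, y)) = (\<lambda>y. indicator W_S2 (0, y) * u (0, y))"
    by (auto simp: fun_eq_iff v_def W_S2_eq indicator_def)
  finally show ?thesis
    by (simp add: lon_average_def)
qed

lemma integral_post_meridians: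
  fixes u :: "real \<times> real \<Rightarrow> real"
  assumes u: "u \<in> borel_measurable M_S2" "\<And>x. x \<in> W_S2 \<Longrightarrow> \<bar>u x\<bar> \<le> B"
  shows "(\<integral>x. u x \<partial>post_meridians) = (lat_average u 0 + lat_average u pi) / 2"
proof -
  define v where "v = (\<lambda>x. indicator W_S2 x * u x)"
  have v: "v \<in> borel_measurable borel" "\<And>x. \<bar>v x\<bar> \<le> B"
    using u borel_measurable_M_S2_iff bound_nonneg_W_S2[OF u(2)] by (auto simp: v_def indicator_def)
  let ?D = "density (restrict_space lborel lat_range) (\<lambda>\<phi>. ennreal (cos \<phi> / 4))"
  let ?P = "?D \<Otimes>\<^sub>M count_space {0::real, pi}"
  interpret D: finite_measure ?D
    by (rule finite_measure_density_restrict_lborel[where c="1 / 4"]) auto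
  interpret C: finite_measure "count_space {0::real, pi}"
    by (rule finite_measure_count_space) simp
  interpret pair_sigma_finite ?D "count_space {0::real, pi}" ..
  have id_borel: "(\<lambda>x. x) \<in> measurable ?P (borel :: (real \<times> real) measure)"
    by (intro measurable_id_pair_borel measurable_id_density_restrict_lborel) simp
  have id_M_S2: "(\<lambda>x. x) \<in> measurable ?P M_S2"
    using id_borel pi_gt_zero
    by (intro measurable_id_M_S2) (auto simp: space_pair_measure space_restrict_space W_S2_def)
  have "integrable ?P v"
    using measurable_compose[OF id_borel v(1)] v(2)
    by (intro finite_measure.integrable_const_bound[where B=B] finite_measure_pair_measure
        D.finite_measure_axioms C.finite_measure_axioms) auto
  have slice_eq: "(\<lambda>\<phi>. indicator lat_range \<phi> * cos \<phi> * v (\<phi>, \<theta>))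
      = (\<lambda>\<phi>. indicator W_S2 (\<phi>, \<theta>) * cos \<phi> * u (\<phi>, \<theta>))" for \<theta>
    by (auto simp: fun_eq_iff v_def W_S2_eq indicator_def)
  have slice: "integrable lborel (\<lambda>\<phi>. indicator lat_range \<phi> * cos \<phi> * v (\<phi>, \<theta>))" for \<theta>
    unfolding slice_eq by (rule integrable_lat_slice[OF u])
  have slice_average: "(\<integral>\<phi>. indicator lat_range \<phi> * cos \<phi> * v (\<phi>, \<theta>) \<partial>lborel) = 2 * lat_average u \<theta>" for \<theta>
    unfolding slice_eq by (simp add: lat_average_def)
  have "(\<integral>x. u x \<partial>post_meridians) = (\<integral>x. v x \<partial>post_meridians)"
    by (intro Bochner_Integration.integral_cong refl) (simp add: post_meridians_def v_def)
  also have "\<dots> = (\<integral>x. v x \<partial>?P)"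
    unfolding post_meridians_def using id_M_S2 v(1) by (subst integral_distr) (auto intro: borel_measurable_M_S2I)
  also have "\<dots> = (\<integral>\<phi>. v (\<phi>, 0) + v (\<phi>, pi) \<partial>?D)"
    using integral_fst'[OF \<open>integrable ?P v\<close>] pi_neq_zero by (simp add: lebesgue_integral_count_space_finite)
  also have "\<dots> = (\<integral>\<phi>. (cos \<phi> / 4) *\<^sub>R (v (\<phi>, 0) + v (\<phi>, pi)) \<partial>restrict_space lborel lat_range)"
  proof (subst integral_density)
    show "(\<lambda>\<phi>. v (\<phi>, 0) + v (\<phi>, pi)) \<in> borel_measurable (restrict_space lborel lat_range)"
      using measurable_slice_fst[OF v(1), of 0] measurable_slice_fst[OF v(1), of pi]
      by (intro measurable_restrict_space1) simp
    show "AE \<phi> in restrict_space lborel lat_range. 0 \<le> cos \<phi> / 4"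
      by (intro AE_I2) (auto simp: space_restrict_space intro!: cos_ge_zero)
    show "(\<lambda>\<phi>. cos \<phi> / 4) \<in> borel_measurable (restrict_space lborel lat_range)"
      by (intro measurable_restrict_space1) simp
  qed auto
  also have "\<dots> = (\<integral>\<phi>. indicator lat_range \<phi> *\<^sub>R ((cos \<phi> / 4) *\<^sub>R (v (\<phi>, 0) + v (\<phi>, pi))) \<partial>lborel)"
    by (subst integral_restrict_space) auto
  also have "\<dots> = (\<integral>\<phi>. (indicator lat_range \<phi> * cos \<phi> * v (\<phi>, 0)) / 4 + (indicator lat_range \<phi> * cos \<phi> * v (\<phi>, pi)) / 4 \<partial>lborel)"
    by (intro Bochner_Integration.integral_cong refl) (simp add: algebra_simps)
  also have "\<dots> = (\<integral>\<phi>. indicator lat_range \<phi> * cos \<phi> * v (\<phi>, 0) \<partial>lborel) / 4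
      + (\<integral>\<phi>. indicator lat_range \<phi> * cos \<phi> * v (\<phi>, pi) \<partial>lborel) / 4"
    using slice[of 0] slice[of pi] by simp
  finally show ?thesis
    unfolding slice_average by simp
qed

lemma metric_continuous_imp_continuous_on:
  assumes "metric_continuous dS2 W_S2 f"
  shows "continuous_on W_S2 f"
  unfolding continuous_on_iff
proof (intro ballI allI impI)
  fix x e assume x: "x \<in> W_S2" and e: "(0::real) < e"
  obtain d where d: "0 < d" "\<And>y. y \<in> W_S2 \<Longrightarrow> dS2 x y < d \<Longrightarrow> \<bar>f y - f x\<bar> < e"
    using assms x e unfolding metric_continuous_def by blast
  show "\<exists>d>0. \<forall>y\<in>W_S2. dist y x < d \<longrightarrow> dist (f y) (f x) < e"
  proof (intro exI[of _ d] conjI ballI impI d(1))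
    fix y assume "y \<in> W_S2" "dist y x < d"
    then have "\<bar>f y - f x\<bar> < e"
      using d(2) dS2_le_dist[of x y] by (simp add: dist_commute)
    then show "dist (f y) (f x) < e"
      by (simp add: dist_real_def)
  qed
qed

lemma metric_continuous_imp_measurable:
  fixes f :: "real \<times> real \<Rightarrow> real"
  assumes "metric_continuous dS2 W_S2 f"
  shows "f \<in> borel_measurable M_S2"
proof -
  have "f \<in> borel_measurable (restrict_space borel W_S2)"
    by (rule borel_measurable_continuous_on_restrict[OF metric_continuous_imp_continuous_on[OF assms]])
  moreover have "sets (restrict_space borel W_S2) = sets M_S2"
    unfolding M_S2_def by (rule sets_restrict_space_cong) simp
  ultimately show ?thesis
    by (simp cong: measurable_cong_sets)
qed

lemma tendsto_lon_average:
  fixes f :: "real \<times> real \<Rightarrow> real"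
  assumes f: "metric_continuous dS2 W_S2 f" "\<And>x. x \<in> W_S2 \<Longrightarrow> \<bar>f x\<bar> \<le> B"
    and \<phi>0: "\<phi>0 \<in> lat_range"
  shows "(lon_average f \<longlongrightarrow> lon_average f \<phi>0) (at \<phi>0 within lat_range)"
proof -
  have f_meas: "(\<lambda>x. indicator W_S2 x * f x) \<in> borel_measurable borel"
    using metric_continuous_imp_measurable[OF f(1)] by (simp add: borel_measurable_M_S2_iff)
  let ?u = "\<lambda>\<phi> \<theta>. indicator W_S2 (\<phi>, \<theta>) * f (\<phi>, \<theta>)"
  have "((\<lambda>\<phi>. \<integral>\<theta>. ?u \<phi> \<theta> \<partial>lborel) \<longlongrightarrow> (\<integral>\<theta>. ?u \<phi>0 \<theta> \<partial>lborel)) (at \<phi>0 within lat_range)"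
  proof (rule tendsto_integral_at_within[where w="\<lambda>\<theta>. B * indicator lon_range \<theta>"])
    show "?u \<phi> \<in> borel_measurable lborel" for \<phi>
      using measurable_slice_snd[OF f_meas, of \<phi>] by simp
    then show "?u \<phi>0 \<in> borel_measurable lborel" .
    show "integrable lborel (\<lambda>\<theta>. B * indicator lon_range \<theta>)"
      by (intro integrable_mult_right integrable_real_indicator) auto
    show "\<bar>?u \<phi> \<theta>\<bar> \<le> B * indicator lon_range \<theta>" for \<phi> \<theta>
      using f(2)[of "(\<phi>, \<theta>)"] bound_nonneg_W_S2[OF f(2)] by (auto simp: W_S2_eq indicator_def)
    fix \<theta>
    show "((\<lambda>\<phi>. ?u \<phi> \<theta>) \<longlongrightarrow> ?u \<phi>0 \<theta>) (at \<phi>0 within lat_range)"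
    proof (cases "\<theta> \<in> lon_range")
      case True
      have dist_le: "per_mod (\<phi>0 - \<phi>) pi \<le> \<bar>\<phi> - \<phi>0\<bar>" for \<phi>
        using per_mod_le_abs[of pi "\<phi>0 - \<phi>"] by (simp add: abs_minus_commute)
      have "((\<lambda>\<phi>. f (\<phi>, \<theta>)) \<longlongrightarrow> f (\<phi>0, \<theta>)) (at \<phi>0 within lat_range)"
      proof (rule metric_continuous_tendsto[OF f(1)])
        show "(\<phi>0, \<theta>) \<in> W_S2" "\<forall>\<^sub>F \<phi> in at \<phi>0 within lat_range. (\<phi>, \<theta>) \<in> W_S2"
          using \<phi>0 True unfolding eventually_at_filter by (auto intro: always_eventually simp: W_S2_eq)
        show "((\<lambda>\<phi>. dS2 (\<phi>0, \<theta>) (\<phi>, \<theta>)) \<longlongrightarrow> 0) (at \<phi>0 within lat_range)"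
          using dist_le by (intro tendsto_zero_if_le_abs) (auto simp: dS2_same_snd per_mod_nonneg)
      qed
      moreover have "\<forall>\<^sub>F \<phi> in at \<phi>0 within lat_range. f (\<phi>, \<theta>) = ?u \<phi> \<theta>"
        using True unfolding eventually_at_filter by (auto intro: always_eventually simp: W_S2_eq)
      ultimately have "((\<lambda>\<phi>. ?u \<phi> \<theta>) \<longlongrightarrow> f (\<phi>0, \<theta>)) (at \<phi>0 within lat_range)"
        by (rule Lim_transform_eventually)
      moreover have "f (\<phi>0, \<theta>) = ?u \<phi>0 \<theta>"
        using \<phi>0 True by (simp add: W_S2_eq)
      ultimately show ?thesis
        by (simp only:)
    qed (simp add: W_S2_eq)
  qed
  then show ?thesis
    unfolding lon_average_def by (intro tendsto_divide tendsto_const) auto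
qed

lemma tendsto_lat_average:
  fixes f :: "real \<times> real \<Rightarrow> real" and \<psi> :: "real \<Rightarrow> real"
  assumes f: "metric_continuous dS2 W_S2 f" "\<And>x. x \<in> W_S2 \<Longrightarrow> \<bar>f x\<bar> \<le> B"
    and \<theta>0: "\<theta>0 \<in> lon_range" and \<psi>: "\<And>t. t \<in> T \<Longrightarrow> \<psi> t \<in> lon_range"
    and lim: "((\<lambda>t. per_mod (\<theta>0 - \<psi> t) (2 * pi)) \<longlongrightarrow> 0) (at t0 within T)"
  shows "((\<lambda>t. lat_average f (\<psi> t)) \<longlongrightarrow> lat_average f \<theta>0) (at t0 within T)"
proof -
  have f_meas: "(\<lambda>x. indicator W_S2 x * f x) \<in> borel_measurable borel"
    using metric_continuous_imp_measurable[OF f(1)] by (simp add: borel_measurable_M_S2_iff)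
  let ?u = "\<lambda>\<theta> \<phi>. indicator W_S2 (\<phi>, \<theta>) * cos \<phi> * f (\<phi>, \<theta>)"
  have "((\<lambda>t. \<integral>\<phi>. ?u (\<psi> t) \<phi> \<partial>lborel) \<longlongrightarrow> (\<integral>\<phi>. ?u \<theta>0 \<phi> \<partial>lborel)) (at t0 within T)"
  proof (rule tendsto_integral_at_within[where w="\<lambda>\<phi>. B * indicator lat_range \<phi>"])
    have "?u \<theta> \<in> borel_measurable borel" for \<theta>
      using measurable_slice_fst[OF f_meas, of \<theta>] by (simp add: ac_simps)
    then show "?u (\<psi> t) \<in> borel_measurable lborel" "?u \<theta>0 \<in> borel_measurable lborel" for t
      by simp_all
    show "integrable lborel (\<lambda>\<phi>. B * indicator lat_range \<phi>)"
      by (intro integrable_mult_right integrable_real_indicator) auto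
    show "\<bar>?u (\<psi> t) \<phi>\<bar> \<le> B * indicator lat_range \<phi>" for t \<phi>
    proof (cases "(\<phi>, \<psi> t) \<in> W_S2")
      case True
      have "\<bar>cos \<phi>\<bar> * \<bar>f (\<phi>, \<psi> t)\<bar> \<le> 1 * B"
        using f(2)[OF True] by (intro mult_mono) auto
      with True show ?thesis
        by (simp add: abs_mult W_S2_eq)
    qed (use bound_nonneg_W_S2[OF f(2)] in \<open>auto simp: indicator_def\<close>)
    fix \<phi>
    show "((\<lambda>t. ?u (\<psi> t) \<phi>) \<longlongrightarrow> ?u \<theta>0 \<phi>) (at t0 within T)"
    proof (cases "\<phi> \<in> lat_range")
      case True
      have "((\<lambda>t. f (\<phi>, \<psi> t)) \<longlongrightarrow> f (\<phi>, \<theta>0)) (at t0 within T)"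
      proof (rule metric_continuous_tendsto[OF f(1)])
        show "(\<phi>, \<theta>0) \<in> W_S2" "\<forall>\<^sub>F t in at t0 within T. (\<phi>, \<psi> t) \<in> W_S2"
          using \<theta>0 \<psi> True unfolding eventually_at_filter by (auto intro: always_eventually simp: W_S2_eq)
        show "((\<lambda>t. dS2 (\<phi>, \<theta>0) (\<phi>, \<psi> t)) \<longlongrightarrow> 0) (at t0 within T)"
          using lim by (simp add: dS2_same_fst)
      qed
      then have "((\<lambda>t. cos \<phi> * f (\<phi>, \<psi> t)) \<longlongrightarrow> cos \<phi> * f (\<phi>, \<theta>0)) (at t0 within T)"
        by (intro tendsto_mult tendsto_const)
      moreover have "\<forall>\<^sub>F t in at t0 within T. cos \<phi> * f (\<phi>, \<psi> t) = ?u (\<psi> t) \<phi>"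
        using True \<psi> unfolding eventually_at_filter by (auto intro: always_eventually simp: W_S2_eq)
      ultimately have "((\<lambda>t. ?u (\<psi> t) \<phi>) \<longlongrightarrow> cos \<phi> * f (\<phi>, \<theta>0)) (at t0 within T)"
        by (rule Lim_transform_eventually)
      moreover have "cos \<phi> * f (\<phi>, \<theta>0) = ?u \<theta>0 \<phi>"
        using \<theta>0 True by (simp add: W_S2_eq)
      ultimately show ?thesis
        by (simp only:)
    qed (auto simp: W_S2_eq indicator_def)
  qed
  then show ?thesis
    unfolding lat_average_def by (intro tendsto_divide tendsto_const) auto
qed

section \<open>The two posteriors\<close>

lemma density_dist_to_set_equator:
  assumes "h \<in> borel_measurable borel"
  shows "density nu_S2 (\<lambda>x. ennreal (h (dist_to_set dS2 equator x)))
    = density nu_S2 (\<lambda>x. ennreal (h \<bar>fst x\<bar>))"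
proof (rule density_cong)
  have "(\<lambda>x. ennreal (h (dist_to_set dS2 equator x))) \<in> borel_measurable M_S2"
    "(\<lambda>x. ennreal (h \<bar>fst x\<bar>)) \<in> borel_measurable M_S2"
    using assms by measurable
  then show "(\<lambda>x. ennreal (h (dist_to_set dS2 equator x))) \<in> borel_measurable nu_S2"
    "(\<lambda>x. ennreal (h \<bar>fst x\<bar>)) \<in> borel_measurable nu_S2"
    by simp_all
qed (auto intro!: AE_I2 simp: dist_to_set_equator)

lemma equator_marginal:
  assumes R: "0 < R" and h: "h \<in> borel_measurable borel" "\<And>d. 0 \<le> h d" "\<And>d. h d \<le> C"
    and feasible: "maxent_feasible nu_S2 dS2 R equator \<sigma>
      (density nu_S2 (\<lambda>x. ennreal (h (dist_to_set dS2 equator x))))"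
  defines "q \<equiv> \<lambda>\<phi>. cos \<phi> * h \<bar>\<phi>\<bar> / 2"
  shows "concentrated_density lat_range R (\<sigma>\<^sup>2) q"
    and "\<And>u B. u \<in> borel_measurable M_S2 \<Longrightarrow> (\<And>x. x \<in> W_S2 \<Longrightarrow> \<bar>u x\<bar> \<le> B) \<Longrightarrow>
      (\<integral>x. u x \<partial>density nu_S2 (\<lambda>x. ennreal (h (dist_to_set dS2 equator x))))
      = (\<integral>\<phi>. indicator lat_range \<phi> * q \<phi> * lon_average u \<phi> \<partial>lborel)"
proof -
  let ?M = "density nu_S2 (\<lambda>x. ennreal (h (dist_to_set dS2 equator x)))"
  have M_fst: "?M = density nu_S2 (\<lambda>x. ennreal (h \<bar>fst x\<bar>))"
    using h(1) by (rule density_dist_to_set_equator)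
  show integral_M: "(\<integral>x. u x \<partial>?M) = (\<integral>\<phi>. indicator lat_range \<phi> * q \<phi> * lon_average u \<phi> \<partial>lborel)"
    if "u \<in> borel_measurable M_S2" "\<And>x. x \<in> W_S2 \<Longrightarrow> \<bar>u x\<bar> \<le> B" for u B
    unfolding M_fst q_def using h that by (intro integral_density_fst) auto
  let ?g = "\<lambda>x. (trunc_dist dS2 R equator x)\<^sup>2"
  have g_eq: "?g x = (min \<bar>fst x\<bar> R)\<^sup>2" if "x \<in> W_S2" for x
    using that by (simp add: trunc_dist_def dist_to_set_equator)
  have g_meas: "?g \<in> borel_measurable M_S2"
    unfolding trunc_dist_def by measurable
  have g_bound: "\<bar>?g x\<bar> \<le> R\<^sup>2" if "x \<in> W_S2" for x
    using g_eq[OF that] R by (auto intro!: power_mono)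
  note feasible_integrals = maxent_feasible_integrals[OF feasible, of "R\<^sup>2"]
  show "concentrated_density lat_range R (\<sigma>\<^sup>2) q"
    unfolding concentrated_density_def
  proof (intro conjI ballI)
    show "q \<in> borel_measurable borel"
      using h(1) unfolding q_def by measurable
    show "0 \<le> q \<phi>" if "\<phi> \<in> lat_range" for \<phi>
      using cos_nonneg_lat[OF that] h(2) by (simp add: q_def)
    show "integrable lborel (\<lambda>t. indicator lat_range t * q t)"
    proof (rule integrableI_bounded_set[where A=lat_range and B=C])
      show "(\<lambda>t. indicator lat_range t * q t) \<in> borel_measurable lborel"
        using h(1) unfolding q_def by measurable
      show "AE t in lborel. t \<in> lat_range \<longrightarrow> norm (indicator lat_range t * q t) \<le> C"
      proof (intro AE_I2 impI)
        fix t :: real assume t: "t \<in> lat_range"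
        have "cos t * h \<bar>t\<bar> \<le> 1 * C"
          using h(2,3) cos_nonneg_lat[OF t] by (intro mult_mono) auto
        then show "norm (indicator lat_range t * q t) \<le> C"
          using t h(2,3)[of "\<bar>t\<bar>"] cos_nonneg_lat[OF t] by (simp add: q_def)
      qed
    qed auto
    have "(\<integral>t. indicator lat_range t * q t \<partial>lborel) = (\<integral>x. 1 \<partial>?M)"
      using integral_M[of "\<lambda>_. 1" 1] lon_average_fst[of "\<lambda>_. 1" "\<lambda>_. 1"]
      by (auto intro!: Bochner_Integration.integral_cong simp: indicator_def)
    then show "(\<integral>t. indicator lat_range t * q t \<partial>lborel) = 1"
      using feasible_integrals g_meas g_bound by simp
    have "(\<integral>t. indicator lat_range t * q t * (min \<bar>t\<bar> R)\<^sup>2 \<partial>lborel) = (\<integral>x. ?g x \<partial>?M)"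
      using integral_M[OF g_meas g_bound] lon_average_fst[of ?g "\<lambda>\<phi>. (min \<bar>\<phi>\<bar> R)\<^sup>2"] g_eq
      by (auto intro!: Bochner_Integration.integral_cong simp: indicator_def)
    then show "(\<integral>t. indicator lat_range t * q t * (min \<bar>t\<bar> R)\<^sup>2 \<partial>lborel) \<le> \<sigma>\<^sup>2"
      using feasible_integrals g_meas g_bound by simp
  qed
qed

lemma equator_weak_limit:
  assumes R: "0 < R"
    and M: "\<And>\<sigma>. 0 < \<sigma> \<Longrightarrow> \<exists>h C. h \<in> borel_measurable borel \<and> (\<forall>d. 0 \<le> h d \<and> h d \<le> C) \<and>
        M \<sigma> = density nu_S2 (\<lambda>x. ennreal (h (dist_to_set dS2 equator x))) \<and>
        maxent_feasible nu_S2 dS2 R equator \<sigma> (M \<sigma>)"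
  shows "weak_conv_metric dS2 W_S2 M post_equator (at_right 0)"
  unfolding weak_conv_metric_def
proof (intro allI impI, elim conjE exE)
  fix f :: "real \<times> real \<Rightarrow> real" and B
  assume f_bound: "\<forall>x\<in>W_S2. \<bar>f x\<bar> \<le> B" and f_cont: "metric_continuous dS2 W_S2 f"
  have f: "f \<in> borel_measurable M_S2" "\<And>x. x \<in> W_S2 \<Longrightarrow> \<bar>f x\<bar> \<le> B"
    using metric_continuous_imp_measurable[OF f_cont] f_bound by auto
  have "((\<lambda>\<sigma>. \<integral>x. f x \<partial>M \<sigma>) \<longlongrightarrow> lon_average f 0) (at_right 0)"
  proof (rule tendsto_concentrating_integrals[where S=lat_range and R=R and B=B and H="lon_average f"])
    show "lat_range \<in> sets borel" "0 \<in> lat_range" "0 < R"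
      by (simp_all add: zero_in_lat_range R)
    show "lon_average f \<in> borel_measurable borel" "\<And>\<phi>. \<phi> \<in> lat_range \<Longrightarrow> \<bar>lon_average f \<phi>\<bar> \<le> B"
      using lon_average_measurable[OF f(1)] abs_lon_average_le[OF f] by auto
    show "(lon_average f \<longlongrightarrow> lon_average f 0) (at 0 within lat_range)"
      by (rule tendsto_lon_average[OF f_cont f(2) zero_in_lat_range])
    fix \<sigma> :: real assume "0 < \<sigma>"
    then obtain h C where h: "h \<in> borel_measurable borel" "\<And>d. 0 \<le> h d" "\<And>d. h d \<le> C"
      and M\<sigma>: "M \<sigma> = density nu_S2 (\<lambda>x. ennreal (h (dist_to_set dS2 equator x)))"
      and feasible: "maxent_feasible nu_S2 dS2 R equator \<sigma> (M \<sigma>)"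
      using M by blast
    note marginal = equator_marginal[OF R h feasible[unfolded M\<sigma>]]
    show "\<exists>q. concentrated_density lat_range R (\<sigma>\<^sup>2) q \<and>
        (\<integral>x. f x \<partial>M \<sigma>) = (\<integral>t. indicator lat_range t * q t * lon_average f t \<partial>lborel)"
      unfolding M\<sigma> using marginal(1) marginal(2)[OF f] by blast
  qed
  then show "((\<lambda>\<sigma>. \<integral>x. f x \<partial>M \<sigma>) \<longlongrightarrow> (\<integral>x. f x \<partial>post_equator)) (at_right 0)"
    by (simp add: integral_post_equator[OF f])
qed

definition opposite_lon :: "real \<Rightarrow> real" where
  "opposite_lon \<theta> = (if \<theta> \<le> 0 then \<theta> + pi else \<theta> - pi)"

abbreviation half_lon_range :: "real set" where
  "half_lon_range \<equiv> {- pi / 2<..pi / 2}"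

lemma opposite_lon_measurable [measurable]: "opposite_lon \<in> borel_measurable borel"
  unfolding opposite_lon_def[abs_def] by measurable

lemma opposite_lon_0: "opposite_lon 0 = pi"
  by (simp add: opposite_lon_def)

lemma opposite_lon_in_lon_range: "\<theta> \<in> half_lon_range \<Longrightarrow> opposite_lon \<theta> \<in> lon_range"
  using pi_gt_zero by (auto simp: opposite_lon_def)

lemma meridian_dist_opposite_lon: "\<theta> \<in> half_lon_range \<Longrightarrow> meridian_dist (opposite_lon \<theta>) = meridian_dist \<theta>"
  by (auto simp: meridian_dist_def opposite_lon_def)

lemma meridian_dist_half_lon_range: "\<theta> \<in> half_lon_range \<Longrightarrow> meridian_dist \<theta> = \<bar>\<theta>\<bar>"
  by (auto simp: meridian_dist_def)

lemma per_mod_opposite_lon_le: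
  assumes "\<theta> \<in> half_lon_range"
  shows "per_mod (pi - opposite_lon \<theta>) (2 * pi) \<le> \<bar>\<theta>\<bar>"
proof (cases "\<theta> \<le> 0")
  case True
  then show ?thesis
    using per_mod_le_abs[of "2 * pi" "- \<theta>"] by (simp add: opposite_lon_def)
next
  case False
  then show ?thesis
    using per_mod_le[of "2 * pi" "2 * pi - \<theta>" 1] by (simp add: opposite_lon_def)
qed

lemma integral_lon_range_fold:
  fixes v :: "real \<Rightarrow> real"
  assumes v: "v \<in> borel_measurable borel" "\<And>\<theta>. \<theta> \<in> lon_range \<Longrightarrow> \<bar>v \<theta>\<bar> \<le> C"
  shows "(\<integral>\<theta>. indicator lon_range \<theta> * v \<theta> \<partial>lborel)
    = (\<integral>\<theta>. indicator half_lon_range \<theta> * (v \<theta> + v (opposite_lon \<theta>)) \<partial>lborel)"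
proof -
  let ?A1 = "{pi / 2<..pi}" and ?A2 = "{- pi<..- pi / 2}"
  let ?S0 = "{- pi / 2<..0}" and ?S1 = "{0<..pi / 2}"
  have integrable_on: "integrable lborel (\<lambda>\<theta>. indicator A \<theta> * w \<theta>)"
    if "w \<in> borel_measurable borel" "\<And>\<theta>. \<theta> \<in> A \<Longrightarrow> \<bar>w \<theta>\<bar> \<le> C" "A \<in> sets borel" "emeasure lborel A < \<infinity>"
    for w A
    using that by (intro integrableI_bounded_set[where A=A and B=C]) (auto simp: indicator_def)
  have shift: "(\<integral>\<theta>. w \<theta> \<partial>lborel) = (\<integral>\<theta>. w (\<theta> + t) \<partial>lborel)" for w :: "real \<Rightarrow> real" and t
    using lborel_integral_real_affine[where c=1 and t=t and f=w] by (simp add: add.commute)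
  have "(\<integral>\<theta>. indicator ?A1 \<theta> * v \<theta> \<partial>lborel) = (\<integral>\<theta>. indicator ?A1 (\<theta> + pi) * v (\<theta> + pi) \<partial>lborel)"
    by (rule shift)
  also have "\<dots> = (\<integral>\<theta>. indicator ?S0 \<theta> * v (\<theta> + pi) \<partial>lborel)"
    by (intro Bochner_Integration.integral_cong) (auto simp: indicator_def)
  finally have shifted1: "(\<integral>\<theta>. indicator ?A1 \<theta> * v \<theta> \<partial>lborel) = (\<integral>\<theta>. indicator ?S0 \<theta> * v (\<theta> + pi) \<partial>lborel)" .
  have "(\<integral>\<theta>. indicator ?A2 \<theta> * v \<theta> \<partial>lborel) = (\<integral>\<theta>. indicator ?A2 (\<theta> + - pi) * v (\<theta> + - pi) \<partial>lborel)"
    by (rule shift)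
  also have "\<dots> = (\<integral>\<theta>. indicator ?S1 \<theta> * v (\<theta> - pi) \<partial>lborel)"
    by (intro Bochner_Integration.integral_cong) (auto simp: indicator_def)
  finally have shifted2: "(\<integral>\<theta>. indicator ?A2 \<theta> * v \<theta> \<partial>lborel) = (\<integral>\<theta>. indicator ?S1 \<theta> * v (\<theta> - pi) \<partial>lborel)" .
  have v_shift: "(\<lambda>\<theta>. v (\<theta> + t)) \<in> borel_measurable borel" for t
    using v(1) by measurable
  have int: "integrable lborel (\<lambda>\<theta>. indicator half_lon_range \<theta> * v \<theta>)"
    "integrable lborel (\<lambda>\<theta>. indicator ?A1 \<theta> * v \<theta>)" "integrable lborel (\<lambda>\<theta>. indicator ?A2 \<theta> * v \<theta>)"
    "integrable lborel (\<lambda>\<theta>. indicator ?S0 \<theta> * v (\<theta> + pi))"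
    "integrable lborel (\<lambda>\<theta>. indicator ?S1 \<theta> * v (\<theta> - pi))"
    using v(2) pi_gt_zero
    by (intro integrable_on v(1) v_shift[of pi, simplified] v_shift[of "- pi", simplified]; force)+
  have split_lon: "indicator lon_range \<theta> * v \<theta>
      = indicator half_lon_range \<theta> * v \<theta> + indicator ?A1 \<theta> * v \<theta> + indicator ?A2 \<theta> * v \<theta>" for \<theta>
    by (auto simp: indicator_def)
  have split_half: "indicator half_lon_range \<theta> * v (opposite_lon \<theta>)
      = indicator ?S0 \<theta> * v (\<theta> + pi) + indicator ?S1 \<theta> * v (\<theta> - pi)" for \<theta>
    by (auto simp: indicator_def opposite_lon_def)
  have "(\<integral>\<theta>. indicator lon_range \<theta> * v \<theta> \<partial>lborel)
      = (\<integral>\<theta>. indicator half_lon_range \<theta> * v \<theta> \<partial>lborel) + (\<integral>\<theta>. indicator ?A1 \<theta> * v \<theta> \<partial>lborel)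
        + (\<integral>\<theta>. indicator ?A2 \<theta> * v \<theta> \<partial>lborel)"
    unfolding split_lon using int by simp
  also have "\<dots> = (\<integral>\<theta>. indicator half_lon_range \<theta> * v \<theta> + (indicator ?S0 \<theta> * v (\<theta> + pi) + indicator ?S1 \<theta> * v (\<theta> - pi)) \<partial>lborel)"
    unfolding shifted1 shifted2 using int by simp
  also have "\<dots> = (\<integral>\<theta>. indicator half_lon_range \<theta> * (v \<theta> + v (opposite_lon \<theta>)) \<partial>lborel)"
    unfolding distrib_left split_half ..
  finally show ?thesis .
qed

definition two_meridian_average :: "(real \<times> real \<Rightarrow> real) \<Rightarrow> real \<Rightarrow> real" where
  "two_meridian_average u \<theta> = (lat_average u \<theta> + lat_average u (opposite_lon \<theta>)) / 2"

lemma two_meridian_average_snd: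
  assumes "\<And>x. x \<in> W_S2 \<Longrightarrow> u x = h (snd x)" "\<theta> \<in> half_lon_range" "h (opposite_lon \<theta>) = h \<theta>"
  shows "two_meridian_average u \<theta> = h \<theta>"
  using assms lat_average_snd[of u h \<theta>] lat_average_snd[of u h "opposite_lon \<theta>"]
    opposite_lon_in_lon_range[of \<theta>] by (auto simp: two_meridian_average_def)

lemma tendsto_two_meridian_average:
  assumes f: "metric_continuous dS2 W_S2 f" "\<And>x. x \<in> W_S2 \<Longrightarrow> \<bar>f x\<bar> \<le> B"
  shows "(two_meridian_average f \<longlongrightarrow> two_meridian_average f 0) (at 0 within half_lon_range)"
proof -
  have "(lat_average f \<longlongrightarrow> lat_average f 0) (at 0 within half_lon_range)"
  proof (rule tendsto_lat_average[OF f])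
    have "per_mod (0 - \<theta>) (2 * pi) \<le> \<bar>\<theta> - 0\<bar>" for \<theta>
      using per_mod_le_abs[of "2 * pi" "- \<theta>"] by simp
    then show "((\<lambda>\<theta>. per_mod (0 - \<theta>) (2 * pi)) \<longlongrightarrow> 0) (at 0 within half_lon_range)"
      by (intro tendsto_zero_if_le_abs) (auto simp: per_mod_nonneg)
  qed (auto simp: pi_gt_zero)
  moreover have "((\<lambda>\<theta>. lat_average f (opposite_lon \<theta>)) \<longlongrightarrow> lat_average f pi) (at 0 within half_lon_range)"
  proof (rule tendsto_lat_average[OF f])
    show "((\<lambda>\<theta>. per_mod (pi - opposite_lon \<theta>) (2 * pi)) \<longlongrightarrow> 0) (at 0 within half_lon_range)"
      using per_mod_opposite_lon_le by (intro tendsto_zero_if_le_abs) (auto simp: per_mod_nonneg)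
    show "pi \<in> lon_range"
      by (simp add: pi_gt_zero)
    show "opposite_lon \<theta> \<in> lon_range" if "\<theta> \<in> half_lon_range" for \<theta>
      using that by (rule opposite_lon_in_lon_range)
  qed
  ultimately have "((\<lambda>\<theta>. (lat_average f \<theta> + lat_average f (opposite_lon \<theta>)) / 2)
      \<longlongrightarrow> (lat_average f 0 + lat_average f pi) / 2) (at 0 within half_lon_range)"
    by (intro tendsto_divide tendsto_add tendsto_const) simp_all
  then show ?thesis
    unfolding two_meridian_average_def[abs_def] opposite_lon_0 .
qed

lemma density_dist_to_set_meridians:
  assumes "h \<in> borel_measurable borel"
  shows "density nu_S2 (\<lambda>x. ennreal (h (dist_to_set dS2 meridians x)))
    = density nu_S2 (\<lambda>x. ennreal (h (meridian_dist (snd x))))"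
proof (rule density_cong)
  have "(\<lambda>x. ennreal (h (dist_to_set dS2 meridians x))) \<in> borel_measurable M_S2"
    "(\<lambda>x. ennreal (h (meridian_dist (snd x)))) \<in> borel_measurable M_S2"
    using assms by measurable
  then show "(\<lambda>x. ennreal (h (dist_to_set dS2 meridians x))) \<in> borel_measurable nu_S2"
    "(\<lambda>x. ennreal (h (meridian_dist (snd x)))) \<in> borel_measurable nu_S2"
    by simp_all
qed (auto intro!: AE_I2 simp: dist_to_set_meridians)

lemma meridians_marginal:
  assumes R: "0 < R" and h: "h \<in> borel_measurable borel" "\<And>d. 0 \<le> h d" "\<And>d. h d \<le> C"
    and feasible: "maxent_feasible nu_S2 dS2 R meridians \<sigma>
      (density nu_S2 (\<lambda>x. ennreal (h (dist_to_set dS2 meridians x))))"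
  defines "q \<equiv> \<lambda>\<theta>. h (meridian_dist \<theta>) / pi"
  shows "concentrated_density half_lon_range R (\<sigma>\<^sup>2) q"
    and "\<And>u B. u \<in> borel_measurable M_S2 \<Longrightarrow> (\<And>x. x \<in> W_S2 \<Longrightarrow> \<bar>u x\<bar> \<le> B) \<Longrightarrow>
      (\<integral>x. u x \<partial>density nu_S2 (\<lambda>x. ennreal (h (dist_to_set dS2 meridians x))))
      = (\<integral>\<theta>. indicator half_lon_range \<theta> * q \<theta> * two_meridian_average u \<theta> \<partial>lborel)"
proof -
  let ?M = "density nu_S2 (\<lambda>x. ennreal (h (dist_to_set dS2 meridians x)))"
  have M_snd: "?M = density nu_S2 (\<lambda>x. ennreal (h (meridian_dist (snd x))))"
    using h(1) by (rule density_dist_to_set_meridians)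
  have q_opposite: "q (opposite_lon \<theta>) = q \<theta>" if "\<theta> \<in> half_lon_range" for \<theta>
    using that by (simp add: q_def meridian_dist_opposite_lon)
  show integral_M: "(\<integral>x. u x \<partial>?M) = (\<integral>\<theta>. indicator half_lon_range \<theta> * q \<theta> * two_meridian_average u \<theta> \<partial>lborel)"
    if u: "u \<in> borel_measurable M_S2" "\<And>x. x \<in> W_S2 \<Longrightarrow> \<bar>u x\<bar> \<le> B" for u B
  proof -
    define v where "v \<theta> = q \<theta> / 2 * lat_average u \<theta>" for \<theta>
    have v: "v \<in> borel_measurable borel" "\<bar>v \<theta>\<bar> \<le> C / pi / 2 * B" for \<theta>
    proof -
      show "v \<in> borel_measurable borel"
        unfolding v_def[abs_def] q_def using h(1) u(1) by measurable
      have "\<bar>q \<theta> / 2\<bar> * \<bar>lat_average u \<theta>\<bar> \<le> C / pi / 2 * B"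
        using h(2,3)[of "meridian_dist \<theta>"] abs_lat_average_le[OF u, of \<theta>] pi_gt_zero
        by (intro mult_mono) (auto simp: q_def divide_right_mono)
      then show "\<bar>v \<theta>\<bar> \<le> C / pi / 2 * B"
        by (simp add: v_def abs_mult)
    qed
    have "(\<lambda>\<theta>. h (meridian_dist \<theta>)) \<in> borel_measurable borel"
      using h(1) by measurable
    then have "(\<integral>x. u x \<partial>?M)
        = (\<integral>\<theta>. indicator lon_range \<theta> * (h (meridian_dist \<theta>) / (2 * pi)) * lat_average u \<theta> \<partial>lborel)"
      unfolding M_snd using h(2,3) u by (intro integral_density_snd)
    also have "\<dots> = (\<integral>\<theta>. indicator lon_range \<theta> * v \<theta> \<partial>lborel)"
      by (intro Bochner_Integration.integral_cong refl) (simp add: v_def q_def)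
    also have "\<dots> = (\<integral>\<theta>. indicator half_lon_range \<theta> * (v \<theta> + v (opposite_lon \<theta>)) \<partial>lborel)"
      using v by (intro integral_lon_range_fold)
    also have "\<dots> = (\<integral>\<theta>. indicator half_lon_range \<theta> * q \<theta> * two_meridian_average u \<theta> \<partial>lborel)"
      by (intro Bochner_Integration.integral_cong refl)
         (auto simp: indicator_def v_def two_meridian_average_def q_opposite field_simps)
    finally show ?thesis .
  qed
  let ?g = "\<lambda>x. (trunc_dist dS2 R meridians x)\<^sup>2"
  have g_eq: "?g x = (min (meridian_dist (snd x)) R)\<^sup>2" if "x \<in> W_S2" for x
    using that by (simp add: trunc_dist_def dist_to_set_meridians)
  have g_meas: "?g \<in> borel_measurable M_S2"
    unfolding trunc_dist_def by measurable
  have g_bound: "\<bar>?g x\<bar> \<le> R\<^sup>2" if "x \<in> W_S2" for x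
    using g_eq[OF that] that R by (auto intro!: power_mono simp: meridian_dist_def W_S2_eq)
  note feasible_integrals = maxent_feasible_integrals[OF feasible, of "R\<^sup>2"]
  show "concentrated_density half_lon_range R (\<sigma>\<^sup>2) q"
    unfolding concentrated_density_def
  proof (intro conjI ballI)
    show "q \<in> borel_measurable borel"
      using h(1) unfolding q_def by measurable
    show "0 \<le> q \<theta>" for \<theta>
      using h(2) pi_gt_zero by (simp add: q_def)
    show "integrable lborel (\<lambda>t. indicator half_lon_range t * q t)"
    proof (rule integrableI_bounded_set[where A=half_lon_range and B="C / pi"])
      show "(\<lambda>t. indicator half_lon_range t * q t) \<in> borel_measurable lborel"
        using h(1) unfolding q_def by measurable
      show "AE t in lborel. t \<in> half_lon_range \<longrightarrow> norm (indicator half_lon_range t * q t) \<le> C / pi"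
        using h(2,3) pi_gt_zero by (auto intro!: AE_I2 divide_right_mono simp: q_def)
    qed auto
    have "(\<integral>t. indicator half_lon_range t * q t \<partial>lborel) = (\<integral>x. 1 \<partial>?M)"
      using integral_M[of "\<lambda>_. 1" 1] two_meridian_average_snd[where u="\<lambda>_. 1" and h="\<lambda>_. 1"]
      by (auto intro!: Bochner_Integration.integral_cong simp: indicator_def)
    then show "(\<integral>t. indicator half_lon_range t * q t \<partial>lborel) = 1"
      using feasible_integrals g_meas g_bound by simp
    have "two_meridian_average ?g \<theta> = (min \<bar>\<theta>\<bar> R)\<^sup>2" if "\<theta> \<in> half_lon_range" for \<theta>
      using two_meridian_average_snd[of ?g "\<lambda>\<theta>. (min (meridian_dist \<theta>) R)\<^sup>2" \<theta>] g_eq that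
      by (simp add: meridian_dist_opposite_lon meridian_dist_half_lon_range)
    then have "(\<integral>t. indicator half_lon_range t * q t * (min \<bar>t\<bar> R)\<^sup>2 \<partial>lborel) = (\<integral>x. ?g x \<partial>?M)"
      using integral_M[OF g_meas g_bound]
      by (auto intro!: Bochner_Integration.integral_cong simp: indicator_def)
    then show "(\<integral>t. indicator half_lon_range t * q t * (min \<bar>t\<bar> R)\<^sup>2 \<partial>lborel) \<le> \<sigma>\<^sup>2"
      using feasible_integrals g_meas g_bound by simp
  qed
qed

lemma meridians_weak_limit:
  assumes R: "0 < R"
    and M: "\<And>\<sigma>. 0 < \<sigma> \<Longrightarrow> \<exists>h C. h \<in> borel_measurable borel \<and> (\<forall>d. 0 \<le> h d \<and> h d \<le> C) \<and>
        M \<sigma> = density nu_S2 (\<lambda>x. ennreal (h (dist_to_set dS2 meridians x))) \<and>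
        maxent_feasible nu_S2 dS2 R meridians \<sigma> (M \<sigma>)"
  shows "weak_conv_metric dS2 W_S2 M post_meridians (at_right 0)"
  unfolding weak_conv_metric_def
proof (intro allI impI, elim conjE exE)
  fix f :: "real \<times> real \<Rightarrow> real" and B
  assume f_bound: "\<forall>x\<in>W_S2. \<bar>f x\<bar> \<le> B" and f_cont: "metric_continuous dS2 W_S2 f"
  have f: "f \<in> borel_measurable M_S2" "\<And>x. x \<in> W_S2 \<Longrightarrow> \<bar>f x\<bar> \<le> B"
    using metric_continuous_imp_measurable[OF f_cont] f_bound by auto
  have "((\<lambda>\<sigma>. \<integral>x. f x \<partial>M \<sigma>) \<longlongrightarrow> two_meridian_average f 0) (at_right 0)"
  proof (rule tendsto_concentrating_integrals[where S=half_lon_range and R=R and B=B and H="two_meridian_average f"])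
    show "half_lon_range \<in> sets borel" "0 \<in> half_lon_range" "0 < R"
      by (simp_all add: pi_gt_zero R)
    show "two_meridian_average f \<in> borel_measurable borel"
      unfolding two_meridian_average_def[abs_def] using f(1) by measurable
    show "\<bar>two_meridian_average f \<theta>\<bar> \<le> B" for \<theta>
      using abs_lat_average_le[OF f, of \<theta>] abs_lat_average_le[OF f, of "opposite_lon \<theta>"]
      by (simp add: two_meridian_average_def)
    show "(two_meridian_average f \<longlongrightarrow> two_meridian_average f 0) (at 0 within half_lon_range)"
      by (rule tendsto_two_meridian_average[OF f_cont f(2)])
    fix \<sigma> :: real assume "0 < \<sigma>"
    then obtain h C where h: "h \<in> borel_measurable borel" "\<And>d. 0 \<le> h d" "\<And>d. h d \<le> C"
      and M\<sigma>: "M \<sigma> = density nu_S2 (\<lambda>x. ennreal (h (dist_to_set dS2 meridians x)))"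
      and feasible: "maxent_feasible nu_S2 dS2 R meridians \<sigma> (M \<sigma>)"
      using M by blast
    note marginal = meridians_marginal[OF R h feasible[unfolded M\<sigma>]]
    show "\<exists>q. concentrated_density half_lon_range R (\<sigma>\<^sup>2) q \<and>
        (\<integral>x. f x \<partial>M \<sigma>) = (\<integral>t. indicator half_lon_range t * q t * two_meridian_average f t \<partial>lborel)"
      unfolding M\<sigma> using marginal(1) marginal(2)[OF f] by blast
  qed
  then show "((\<lambda>\<sigma>. \<integral>x. f x \<partial>M \<sigma>) \<longlongrightarrow> (\<integral>x. f x \<partial>post_meridians)) (at_right 0)"
    by (simp add: integral_post_meridians[OF f] two_meridian_average_def opposite_lon_0)
qed

lemma dist_to_set_nonneg: "A \<noteq> {} \<Longrightarrow> 0 \<le> dist_to_set dS2 A w"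
  unfolding dist_to_set_def by (intro cINF_greatest) (auto simp: dS2_nonneg)

lemma dist_to_set_le_dS2: "a \<in> A \<Longrightarrow> dist_to_set dS2 A w \<le> dS2 w a"
  unfolding dist_to_set_def by (rule cINF_lower) (auto intro: bdd_belowI2[where m=0] simp: dS2_nonneg)

lemma measure_nu_S2_square_pos:
  assumes a: "0 < a" "a \<le> 1"
  shows "0 < measure nu_S2 ({- a<..<a} \<times> {- a<..<a})"
proof -
  let ?B = "{- a<..<a} \<times> {- a<..<a} :: (real \<times> real) set"
  have B_borel: "?B \<in> sets borel"
    by (intro borel_Times) auto
  have B_W: "?B \<subseteq> W_S2"
    using a pi_gt3 by (auto simp: W_S2_def)
  have B_M: "?B \<in> sets M_S2"
    unfolding M_S2_def using B_borel B_W by (subst sets_restrict_space_iff) auto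
  have cos_1: "0 < cos (1::real)"
    using pi_gt3 by (intro cos_gt_zero) auto
  have "ennreal (cos 1 / (4 * pi)) * emeasure lborel ?B = (\<integral>\<^sup>+x. ennreal (cos 1 / (4 * pi)) * indicator ?B x \<partial>lborel)"
    using B_borel by (simp add: nn_integral_cmult_indicator)
  also have "\<dots> \<le> (\<integral>\<^sup>+x. ennreal (cos (fst x) / (4 * pi)) * indicator ?B x * indicator W_S2 x \<partial>lborel)"
  proof (intro nn_integral_mono)
    fix x :: "real \<times> real"
    show "ennreal (cos 1 / (4 * pi)) * indicator ?B x \<le> ennreal (cos (fst x) / (4 * pi)) * indicator ?B x * indicator W_S2 x"
    proof (cases "x \<in> ?B")
      case True
      then have "cos 1 \<le> cos \<bar>fst x\<bar>"
        using a pi_gt3 by (intro cos_monotone_0_pi_le) (auto simp: mem_Times_iff)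
      then have "cos 1 \<le> cos (fst x)"
        by simp
      moreover have "x \<in> W_S2"
        using True B_W by auto
      ultimately show ?thesis
        using True by (simp add: ennreal_leI divide_right_mono)
    qed simp
  qed
  also have "\<dots> = (\<integral>\<^sup>+x. ennreal (cos (fst x) / (4 * pi)) * indicator ?B x \<partial>M_S2)"
    unfolding M_S2_def by (subst nn_integral_restrict_space) auto
  also have "\<dots> = emeasure nu_S2 ?B"
    unfolding nu_S2_def using B_M by (intro emeasure_density[symmetric]) auto
  finally have "ennreal (cos 1 / (4 * pi)) * emeasure lborel ?B \<le> emeasure nu_S2 ?B" .
  moreover have "emeasure (lborel :: (real \<times> real) measure) ?B = ennreal (2 * a) * ennreal (2 * a)"
    using a unfolding lborel_prod[symmetric] by (subst lborel.emeasure_pair_measure_Times) auto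
  ultimately have "ennreal (cos 1 / (4 * pi) * (2 * a) * (2 * a)) \<le> emeasure nu_S2 ?B"
    using a cos_1 by (simp add: ennreal_mult[symmetric] mult_ac)
  moreover have "0 < cos 1 / (4 * pi) * (2 * a) * (2 * a)"
    using a cos_1 by simp
  ultimately have "0 < emeasure nu_S2 ?B"
    by (meson ennreal_less_zero_iff less_le_trans)
  then show ?thesis
    using prob_space.finite_measure[OF prob_space_nu_S2] by (simp add: finite_measure.emeasure_eq_measure)
qed

lemma measure_trunc_dist_less_pos:
  assumes R: "0 < R" and A: "(0, 0) \<in> A"
    and meas: "(\<lambda>x. (trunc_dist dS2 R A x)\<^sup>2) \<in> borel_measurable M_S2" and e: "0 < e"
  shows "0 < measure nu_S2 {x \<in> space nu_S2. (trunc_dist dS2 R A x)\<^sup>2 < e}"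
proof -
  interpret prob_space nu_S2
    by (rule prob_space_nu_S2)
  define a where "a = min 1 (sqrt e / 2)"
  have a: "0 < a" "a \<le> 1"
    using e by (auto simp: a_def)
  have "2 * a \<le> sqrt e"
    by (simp add: a_def)
  then have "(2 * a)\<^sup>2 \<le> (sqrt e)\<^sup>2"
    using a by (intro power_mono) auto
  then have a_sq: "(2 * a)\<^sup>2 \<le> e"
    using e by simp
  have "{- a<..<a} \<times> {- a<..<a} \<subseteq> {x \<in> space nu_S2. (trunc_dist dS2 R A x)\<^sup>2 < e}"
  proof
    fix x :: "real \<times> real" assume x: "x \<in> {- a<..<a} \<times> {- a<..<a}"
    then have "x \<in> W_S2"
      using a pi_gt3 by (auto simp: W_S2_def)
    have "0 \<le> trunc_dist dS2 R A x"
      using dist_to_set_nonneg[of A x] A R by (auto simp: trunc_dist_def)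
    moreover have "trunc_dist dS2 R A x \<le> dist x (0, 0)"
      using dist_to_set_le_dS2[OF A, of x] dS2_le_dist[of x "(0, 0)"] by (simp add: trunc_dist_def)
    moreover have "dist x (0, 0) = norm x"
      by (cases x) (simp add: dist_Pair_Pair norm_Pair dist_real_def)
    then have "dist x (0, 0) \<le> \<bar>fst x\<bar> + \<bar>snd x\<bar>"
      using norm_Pair_le[of "fst x" "snd x"] by simp
    moreover have "\<bar>fst x\<bar> + \<bar>snd x\<bar> < 2 * a"
      using x by (auto simp: mem_Times_iff)
    ultimately have "(trunc_dist dS2 R A x)\<^sup>2 < (2 * a)\<^sup>2"
      by (intro power_strict_mono) auto
    with \<open>x \<in> W_S2\<close> a_sq show "x \<in> {x \<in> space nu_S2. (trunc_dist dS2 R A x)\<^sup>2 < e}"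
      by simp
  qed
  moreover have "Measurable.pred M_S2 (\<lambda>x. (trunc_dist dS2 R A x)\<^sup>2 < e)"
    using meas by measurable
  then have "{x \<in> space nu_S2. (trunc_dist dS2 R A x)\<^sup>2 < e} \<in> sets nu_S2"
    by (simp add: pred_def)
  ultimately show ?thesis
    using measure_nu_S2_square_pos[OF a(1,2)] finite_measure_mono by (meson less_le_trans)
qed

lemma maxent_posterior_S2I:
  assumes R: "0 < R" and A: "(0, 0) \<in> A" and dist_meas: "dist_to_set dS2 A \<in> borel_measurable M_S2"
    and weak: "\<And>M. (\<And>\<sigma>. 0 < \<sigma> \<Longrightarrow> \<exists>h C. h \<in> borel_measurable borel \<and> (\<forall>d. 0 \<le> h d \<and> h d \<le> C) \<and>
        M \<sigma> = density nu_S2 (\<lambda>x. ennreal (h (dist_to_set dS2 A x))) \<and>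
        maxent_feasible nu_S2 dS2 R A \<sigma> (M \<sigma>)) \<Longrightarrow> weak_conv_metric dS2 W_S2 M P (at_right 0)"
  shows "maxent_posterior nu_S2 dS2 R A P"
proof -
  let ?g = "\<lambda>x. (trunc_dist dS2 R A x)\<^sup>2"
  have g_meas: "?g \<in> borel_measurable M_S2"
    using dist_meas unfolding trunc_dist_def by measurable
  have minimizer: "\<exists>l\<ge>0. \<forall>\<mu>. maxent_minimizer nu_S2 dS2 R A \<sigma> \<mu> \<longleftrightarrow>
      \<mu> = density nu_S2 (\<lambda>x. ennreal (gibbs_density nu_S2 ?g l x))" if \<sigma>: "0 < \<sigma>" for \<sigma>
  proof -
    have "0 \<le> dist_to_set dS2 A w" for w
      using A by (intro dist_to_set_nonneg) auto
    moreover have "?g \<in> borel_measurable nu_S2"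
      using g_meas by simp
    moreover have "0 < measure nu_S2 {w \<in> space nu_S2. ?g w < e}" if "0 < e" for e
      using R A g_meas that by (rule measure_trunc_dist_less_pos)
    ultimately show ?thesis
      using maxent_minimizer_gibbs[OF prob_space_nu_S2 R \<sigma>] by blast
  qed
  show ?thesis
    unfolding maxent_posterior_def space_nu_S2
  proof (intro conjI allI impI)
    show "\<exists>!\<mu>. maxent_minimizer nu_S2 dS2 R A \<sigma> \<mu>" if \<sigma>: "0 < \<sigma>" for \<sigma>
    proof -
      obtain l where "\<And>\<mu>. maxent_minimizer nu_S2 dS2 R A \<sigma> \<mu> \<longleftrightarrow>
          \<mu> = density nu_S2 (\<lambda>x. ennreal (gibbs_density nu_S2 ?g l x))"
        using minimizer[OF \<sigma>] by blast
      then show ?thesis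
        by simp
    qed
    show "weak_conv_metric dS2 W_S2 (\<lambda>\<sigma>. THE \<mu>. maxent_minimizer nu_S2 dS2 R A \<sigma> \<mu>) P (at_right 0)"
    proof (rule weak)
      fix \<sigma> :: real assume "0 < \<sigma>"
      then obtain l where l: "0 \<le> l" and min: "\<And>\<mu>. maxent_minimizer nu_S2 dS2 R A \<sigma> \<mu> \<longleftrightarrow>
          \<mu> = density nu_S2 (\<lambda>x. ennreal (gibbs_density nu_S2 ?g l x))"
        using minimizer by blast
      obtain h C where h: "h \<in> borel_measurable borel" "\<forall>d. 0 \<le> h d \<and> h d \<le> C"
        and gibbs: "gibbs_density nu_S2 ?g l = (\<lambda>x. h (dist_to_set dS2 A x))"
        using gibbs_density_trunc_dist[OF l] by blast
      have the_min: "(THE \<mu>. maxent_minimizer nu_S2 dS2 R A \<sigma> \<mu>) = density nu_S2 (\<lambda>x. ennreal (h (dist_to_set dS2 A x)))"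
        using min gibbs by simp
      then have "maxent_minimizer nu_S2 dS2 R A \<sigma> (THE \<mu>. maxent_minimizer nu_S2 dS2 R A \<sigma> \<mu>)"
        using min gibbs by simp
      then have "maxent_feasible nu_S2 dS2 R A \<sigma> (THE \<mu>. maxent_minimizer nu_S2 dS2 R A \<sigma> \<mu>)"
        by (simp add: maxent_minimizer_def)
      with h the_min show "\<exists>h C. h \<in> borel_measurable borel \<and> (\<forall>d. 0 \<le> h d \<and> h d \<le> C) \<and>
          (THE \<mu>. maxent_minimizer nu_S2 dS2 R A \<sigma> \<mu>) = density nu_S2 (\<lambda>x. ennreal (h (dist_to_set dS2 A x))) \<and>
          maxent_feasible nu_S2 dS2 R A \<sigma> (THE \<mu>. maxent_minimizer nu_S2 dS2 R A \<sigma> \<mu>)"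
        by blast
    qed
  qed
qed

lemma maxent_posterior_equator:
  assumes "0 < R"
  shows "maxent_posterior nu_S2 dS2 R equator post_equator"
proof (rule maxent_posterior_S2I[OF assms _ measurable_dist_to_set_equator])
  show "(0, 0) \<in> equator"
    using zero_zero_in_W_S2 by (simp add: equator_def)
qed (rule equator_weak_limit[OF assms])

lemma maxent_posterior_meridians:
  assumes "0 < R"
  shows "maxent_posterior nu_S2 dS2 R meridians post_meridians"
proof (rule maxent_posterior_S2I[OF assms _ measurable_dist_to_set_meridians])
  show "(0, 0) \<in> meridians"
    using zero_zero_in_W_S2 by (simp add: meridians_def)
qed (rule meridians_weak_limit[OF assms])

theorem proposition4p2:
  fixes R :: real
  assumes "R > 0"
  shows "maxent_posterior nu_S2 dS2 R equator post_equator \<and>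
         maxent_posterior nu_S2 dS2 R meridians post_meridians"
  using assms maxent_posterior_equator maxent_posterior_meridians by blast

end
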